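(* Let $O$ be a complete discrete valuation ring of characteristic $p$ with perfect residue field, fraction field $K$, which is an $\mathbb{F}_q$-algebra, and let $M\in\mathrm{Mod}_{O,\sigma}$. Suppose $a\in A[M]_K:=A[M]\otimes_OK$ satisfies $\delta^+a:=\Delta(a)-a\otimes1-1\otimes a\in A[M]\otimes_OA[M]$ and $[\alpha]a=\alpha a$ for all $\alpha\in\mathbb{F}_q$. Then there is $a'\in A[M]$ such that $\delta^+a=\delta^+a'$ and $a-a'\in M_K:=M\otimes_OK$.
   Context: $\sigma:O\to O$ is the $q$-th power map, $M_\sigma=M\otimes_{O,\sigma}O$. $\mathrm{Mod}_{O,\sigma}$: free $O$-modules $M$ of finite rank with $O$-linear $\Phi:M_\sigma\to M$ such that $\Phi\otimes K$ is an isomorphism. $A[M]=\mathrm{Sym}_OM/(\Phi(m\otimes1)-m^{\otimes q}:m\in M)$, a Hopf algebra with comultiplication $\Delta m=m\otimes1+1\otimes m$ and $\mathbb{F}_q$-action by algebra endomorphisms $[\alpha]m=\alpha m$ for $m\in M$; $M$ is identified with its image in $A[M]$. *)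

theory Defs
  imports Main "HOL-Library.Poly_Mapping" "HOL-Computational_Algebra.Primes"
begin

text \<open>A discrete valuation v on the field K (values of v at 0 are irrelevant).\<close>
definition discrete_valuation :: "('k::field \<Rightarrow> int) \<Rightarrow> bool" where
  "discrete_valuation v \<longleftrightarrow>
     (\<forall>x y. x \<noteq> 0 \<longrightarrow> y \<noteq> 0 \<longrightarrow> v (x * y) = v x + v y) \<and>
     (\<forall>x y. x \<noteq> 0 \<longrightarrow> y \<noteq> 0 \<longrightarrow> x + y \<noteq> 0 \<longrightarrow> min (v x) (v y) \<le> v (x + y)) \<and>
     (\<exists>\<pi>. \<pi> \<noteq> 0 \<and> v \<pi> = 1)"

definition vball :: "('k::field \<Rightarrow> int) \<Rightarrow> int \<Rightarrow> 'k set" where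
  "vball v N = {x. x = 0 \<or> N \<le> v x}"

definition val_ring :: "('k::field \<Rightarrow> int) \<Rightarrow> 'k set" where
  "val_ring v = vball v 0"

definition max_ideal :: "('k::field \<Rightarrow> int) \<Rightarrow> 'k set" where
  "max_ideal v = vball v 1"

definition val_complete :: "('k::field \<Rightarrow> int) \<Rightarrow> bool" where
  "val_complete v \<longleftrightarrow>
     (\<forall>s :: nat \<Rightarrow> 'k.
        (\<forall>s_i \<in> range s. s_i \<in> val_ring v) \<longrightarrow>
        (\<forall>N. \<exists>m. \<forall>i\<ge>m. \<forall>j\<ge>m. s i - s j \<in> vball v N) \<longrightarrow>
        (\<exists>L \<in> val_ring v. \<forall>N. \<exists>m. \<forall>i\<ge>m. s i - L \<in> vball v N))"

definition perfect_residue_field :: "nat \<Rightarrow> ('k::field \<Rightarrow> int) \<Rightarrow> bool" where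
  "perfect_residue_field p v \<longleftrightarrow>
     (\<forall>x \<in> val_ring v. \<exists>y \<in> val_ring v. x - y ^ p \<in> max_ideal v)"

definition Fq :: "nat \<Rightarrow> 'k::field set" where
  "Fq q = {x. x ^ q = x}"

type_synonym 'k mpoly = "(nat \<Rightarrow>\<^sub>0 nat) \<Rightarrow>\<^sub>0 'k"

definition Const :: "'k::comm_ring_1 \<Rightarrow> 'k mpoly" where
  "Const c = Poly_Mapping.single 0 c"

definition Var :: "nat \<Rightarrow> 'k::comm_ring_1 mpoly" where
  "Var i = Poly_Mapping.single (Poly_Mapping.single i 1) 1"

definition subst :: "(nat \<Rightarrow> 'k::comm_ring_1 mpoly) \<Rightarrow> 'k mpoly \<Rightarrow> 'k mpoly" where
  "subst \<sigma> p = (\<Sum>mon\<in>Poly_Mapping.keys p. Const (Poly_Mapping.lookup p mon) *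
                  (\<Prod>i\<in>Poly_Mapping.keys (mon :: nat \<Rightarrow>\<^sub>0 nat). \<sigma> i ^ Poly_Mapping.lookup mon i))"

definition vars_in :: "nat set \<Rightarrow> 'k::zero mpoly \<Rightarrow> bool" where
  "vars_in S p \<longleftrightarrow> (\<forall>m\<in>Poly_Mapping.keys p. Poly_Mapping.keys m \<subseteq> S)"

definition coeffs_in :: "'k set \<Rightarrow> 'k::zero mpoly \<Rightarrow> bool" where
  "coeffs_in R p \<longleftrightarrow> (\<forall>m. Poly_Mapping.lookup p m \<in> R)"

definition ideal_gen :: "nat set \<Rightarrow> 'k::comm_ring_1 mpoly set \<Rightarrow> 'k mpoly set" where
  "ideal_gen S G = {p. \<exists>F h. finite F \<and> F \<subseteq> G \<and> (\<forall>g\<in>F. vars_in S (h g)) \<and>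
                          p = (\<Sum>g\<in>F. h g * g)}"

section \<open>The algebra A[M] for M = O^n with basis e_0..e_(n-1) and Phi(e_j \<otimes> 1) = \<Sum>_i C i j e_i\<close>

text \<open>The element m = \<Sum>_j a_j e_j of M, placed on the variables off+0 .. off+n-1.\<close>
definition elemM :: "nat \<Rightarrow> nat \<Rightarrow> (nat \<Rightarrow> 'k::comm_ring_1) \<Rightarrow> 'k mpoly" where
  "elemM n off a = (\<Sum>j<n. Const (a j) * Var (off + j))"

text \<open>Phi(m \<otimes> 1) for m = \<Sum>_j a_j e_j, i.e. \<Sum>_j a_j^q Phi(e_j \<otimes> 1).\<close>
definition PhiM :: "nat \<Rightarrow> nat \<Rightarrow> (nat \<Rightarrow> nat \<Rightarrow> 'k::comm_ring_1) \<Rightarrow> nat \<Rightarrow> (nat \<Rightarrow> 'k) \<Rightarrow> 'k mpoly" where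
  "PhiM q n C off a = (\<Sum>j<n. Const (a j ^ q) * elemM n off (\<lambda>i. C i j))"

text \<open>Defining relations Phi(m \<otimes> 1) - m^q, m \<in> M, on the variables off .. off+n-1.\<close>
definition rels :: "nat \<Rightarrow> nat \<Rightarrow> ('k::field \<Rightarrow> int) \<Rightarrow> (nat \<Rightarrow> nat \<Rightarrow> 'k) \<Rightarrow> nat \<Rightarrow> 'k mpoly set" where
  "rels q n v C off = {PhiM q n C off a - elemM n off a ^ q | a. \<forall>j. a j \<in> val_ring v}"

text \<open>Kernel of K[x_0..x_(n-1)] \<rightarrow> A[M]_K = A[M] \<otimes>_O K.\<close>
definition idealA :: "nat \<Rightarrow> nat \<Rightarrow> ('k::field \<Rightarrow> int) \<Rightarrow> (nat \<Rightarrow> nat \<Rightarrow> 'k) \<Rightarrow> 'k mpoly set" where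
  "idealA q n v C = ideal_gen {..<n} (rels q n v C 0)"

text \<open>Kernel of K[x_0..x_(2n-1)] \<rightarrow> A[M]_K \<otimes>_K A[M]_K (first factor on x_0..x_(n-1),
  second factor on x_n..x_(2n-1)).\<close>
definition idealAA :: "nat \<Rightarrow> nat \<Rightarrow> ('k::field \<Rightarrow> int) \<Rightarrow> (nat \<Rightarrow> nat \<Rightarrow> 'k) \<Rightarrow> 'k mpoly set" where
  "idealAA q n v C = ideal_gen {..<2*n} (rels q n v C 0 \<union> rels q n v C n)"

text \<open>Comultiplication and the maps a \<mapsto> a \<otimes> 1, a \<mapsto> 1 \<otimes> a on representatives.\<close>
definition Delta :: "nat \<Rightarrow> 'k::comm_ring_1 mpoly \<Rightarrow> 'k mpoly" where
  "Delta n a = subst (\<lambda>i. if i < n then Var i + Var (n + i) else Var i) a"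

definition one_tensor :: "nat \<Rightarrow> 'k::comm_ring_1 mpoly \<Rightarrow> 'k mpoly" where
  "one_tensor n a = subst (\<lambda>i. Var (n + i)) a"

definition delta_plus :: "nat \<Rightarrow> 'k::comm_ring_1 mpoly \<Rightarrow> 'k mpoly" where
  "delta_plus n a = Delta n a - a - one_tensor n a"

definition scal_act :: "'k::comm_ring_1 \<Rightarrow> 'k mpoly \<Rightarrow> 'k mpoly" where
  "scal_act \<alpha> a = subst (\<lambda>i. Const \<alpha> * Var i) a"

definition Phi_K_iso :: "nat \<Rightarrow> (nat \<Rightarrow> nat \<Rightarrow> 'k::field) \<Rightarrow> bool" where
  "Phi_K_iso n C \<longleftrightarrow>
     bij_betw (\<lambda>b i. if i < n then (\<Sum>j<n. C i j * b j) else 0)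
              {b. \<forall>j\<ge>n. b j = 0} {b. \<forall>j\<ge>n. b j = 0}"

end

theory Submission
  imports Defs "HOL-Computational_Algebra.Polynomial"
begin

(* Let J be the ideal generated by the relations x_j^q - \<Sum>_i C i j x_i; in characteristic p it is
  the ideal of relations of A[M]_K.  Modulo J every polynomial has a unique normal form supported on
  reduced monomials (all exponents below q), and reduction preserves integrality because C is
  integral.  Replace a by its normal form r.  Then \<delta>\<^sup>+ r is reduced as well, so it is the normal
  form of the integral representative of \<delta>\<^sup>+ a and hence integral.  For a monomial x^e and an
  index i with e_i > 0, the coefficient of x_i^(e_i) \<otimes> x^e / x_i^(e_i) in \<delta>\<^sup>+ r is r_e, so r_e is
  integral unless x^e = x_i^t is a pure power.  For those, F_q-linearity gives \<alpha>^t r_e = \<alpha> r_e for all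
  \<alpha> \<in> F_q; since X^t - X has fewer than q roots when t < q and t \<noteq> 1, r_e = 0 unless t = 1.
  Hence only the linear part of r may be non-integral, and removing it gives a'. *)

abbreviation lookup :: "('a \<Rightarrow>\<^sub>0 'b::zero) \<Rightarrow> 'a \<Rightarrow> 'b" where
  "lookup \<equiv> Poly_Mapping.lookup"

abbreviation keys :: "('a \<Rightarrow>\<^sub>0 'b::zero) \<Rightarrow> 'a set" where
  "keys \<equiv> Poly_Mapping.keys"

abbreviation single :: "'a \<Rightarrow> 'b::zero \<Rightarrow> 'a \<Rightarrow>\<^sub>0 'b" where
  "single \<equiv> Poly_Mapping.single"

section \<open>Monomials and substitution\<close>

lemma lookup_Const_mult: "lookup (Const c * P) m = c * lookup P m"
proof -
  have "Const c * P = Poly_Mapping.map ((*) c) P"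
    by (simp add: Const_def mult_map_scale_conv_mult)
  thus ?thesis by (simp add: Poly_Mapping.map.rep_eq when_def)
qed

lemma keys_Const_mult: "keys (Const c * P) \<subseteq> keys P"
  by (auto simp: in_keys_iff lookup_Const_mult)

lemma Const_mult_single: "Const c * single e d = single e (c * d)"
  by (simp add: Const_def mult_single)

lemma Const_add: "Const (a + b) = Const a + Const b"
  by (simp add: Const_def single_add)

lemma Const_mult: "Const (a * b) = (Const a * Const b :: 'k::comm_ring_1 mpoly)"
  by (simp add: Const_def mult_single)

lemma Const_0 [simp]: "Const 0 = 0"
  by (simp add: Const_def)

lemma Const_1 [simp]: "Const 1 = 1"
  by (simp add: Const_def)

lemma Const_power: "Const (a ^ k) = (Const a ^ k :: 'k::comm_ring_1 mpoly)"
  by (induction k) (simp_all add: Const_mult)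

lemma Const_prod: "Const (\<Prod>i\<in>A. f i) = (\<Prod>i\<in>A. Const (f i) :: 'k::comm_ring_1 mpoly)"
  by (induction A rule: infinite_finite_induct) (simp_all add: Const_mult)

lemma of_nat_mpoly: "(of_nat n :: 'k::comm_ring_1 mpoly) = Const (of_nat n)"
  by (simp add: Const_def)

lemma poly_mapping_sum_single: "p = (\<Sum>e\<in>keys p. single e (lookup p e))"
proof (rule poly_mapping_eqI)
  fix k
  have "lookup (\<Sum>e\<in>keys p. single e (lookup p e)) k = (\<Sum>e\<in>keys p. if e = k then lookup p e else 0)"
    by (simp add: lookup_sum lookup_single when_def eq_commute)
  also have "\<dots> = lookup p k"
    by (cases "k \<in> keys p") (auto simp: in_keys_iff)
  finally show "lookup p k = lookup (\<Sum>e\<in>keys p. single e (lookup p e)) k" by simp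
qed

definition lin_ext :: "((nat \<Rightarrow>\<^sub>0 nat) \<Rightarrow> 'k::comm_ring_1 mpoly) \<Rightarrow> 'k mpoly \<Rightarrow> 'k mpoly" where
  "lin_ext f p = (\<Sum>e\<in>keys p. Const (lookup p e) * f e)"

lemma lin_ext_superset:
  "finite S \<Longrightarrow> keys p \<subseteq> S \<Longrightarrow> lin_ext f p = (\<Sum>e\<in>S. Const (lookup p e) * f e)"
  unfolding lin_ext_def by (rule sum.mono_neutral_left) (auto simp: in_keys_iff)

lemma lin_ext_add: "lin_ext f (p + q) = lin_ext f p + lin_ext f q"
proof -
  let ?S = "keys p \<union> keys q"
  have "lin_ext f (p + q) = (\<Sum>e\<in>?S. Const (lookup (p + q) e) * f e)"
    by (rule lin_ext_superset) (auto dest: set_mp[OF keys_add])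
  also have "\<dots> = (\<Sum>e\<in>?S. Const (lookup p e) * f e) + (\<Sum>e\<in>?S. Const (lookup q e) * f e)"
    by (simp add: lookup_add Const_add distrib_right sum.distrib)
  also have "\<dots> = lin_ext f p + lin_ext f q"
    by (simp add: lin_ext_superset[of ?S p f] lin_ext_superset[of ?S q f])
  finally show ?thesis .
qed

lemma lin_ext_zero [simp]: "lin_ext f 0 = 0"
  by (simp add: lin_ext_def)

lemma lin_ext_diff: "lin_ext f (p - q) = lin_ext f p - lin_ext f q"
  using lin_ext_add[of f "p - q" q] by (simp add: algebra_simps)

lemma lin_ext_sum: "lin_ext f (\<Sum>i\<in>A. g i) = (\<Sum>i\<in>A. lin_ext f (g i))"
  by (induction A rule: infinite_finite_induct) (simp_all add: lin_ext_add)

lemma lin_ext_single: "lin_ext f (single e c) = Const c * f e"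
  by (simp add: lin_ext_def)

lemma lin_ext_Const_mult: "lin_ext f (Const c * p) = Const c * lin_ext f p"
proof -
  have "lin_ext f (Const c * p) = (\<Sum>e\<in>keys p. Const (lookup (Const c * p) e) * f e)"
    by (rule lin_ext_superset) (auto simp: in_keys_iff lookup_Const_mult)
  thus ?thesis by (simp add: lin_ext_def lookup_Const_mult Const_mult sum_distrib_left mult.assoc)
qed

definition subst_monom :: "(nat \<Rightarrow> 'k::comm_ring_1 mpoly) \<Rightarrow> (nat \<Rightarrow>\<^sub>0 nat) \<Rightarrow> 'k mpoly" where
  "subst_monom \<sigma> e = (\<Prod>i\<in>keys e. \<sigma> i ^ lookup e i)"

lemma subst_eq_lin_ext: "subst \<sigma> = lin_ext (subst_monom \<sigma>)"
  by (simp add: fun_eq_iff subst_def lin_ext_def subst_monom_def)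

lemma subst_monom_superset:
  "finite S \<Longrightarrow> keys e \<subseteq> S \<Longrightarrow> subst_monom \<sigma> e = (\<Prod>i\<in>S. \<sigma> i ^ lookup e i)"
  unfolding subst_monom_def by (rule prod.mono_neutral_left) (auto simp: in_keys_iff)

lemma subst_monom_add: "subst_monom \<sigma> (e + e') = subst_monom \<sigma> e * subst_monom \<sigma> e'"
proof -
  let ?S = "keys e \<union> keys e'"
  have "subst_monom \<sigma> (e + e') = (\<Prod>i\<in>?S. \<sigma> i ^ lookup (e + e') i)"
    by (rule subst_monom_superset) (auto dest: set_mp[OF keys_add])
  also have "\<dots> = (\<Prod>i\<in>?S. \<sigma> i ^ lookup e i) * (\<Prod>i\<in>?S. \<sigma> i ^ lookup e' i)"
    by (simp add: lookup_add power_add prod.distrib)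
  also have "\<dots> = subst_monom \<sigma> e * subst_monom \<sigma> e'"
    by (simp add: subst_monom_superset[of ?S e] subst_monom_superset[of ?S e'])
  finally show ?thesis .
qed

lemma subst_monom_zero [simp]: "subst_monom \<sigma> 0 = 1"
  by (simp add: subst_monom_def)

lemma subst_monom_single: "subst_monom \<sigma> (single i k) = \<sigma> i ^ k"
  by (cases "k = 0") (simp_all add: subst_monom_def)

lemma subst_diff: "subst \<sigma> (p - q) = subst \<sigma> p - subst \<sigma> q"
  by (simp add: subst_eq_lin_ext lin_ext_diff)

lemma subst_sum: "subst \<sigma> (\<Sum>i\<in>A. g i) = (\<Sum>i\<in>A. subst \<sigma> (g i))"
  by (simp add: subst_eq_lin_ext lin_ext_sum)

lemma subst_zero [simp]: "subst \<sigma> 0 = 0"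
  by (simp add: subst_eq_lin_ext)

lemma subst_single: "subst \<sigma> (single e c) = Const c * subst_monom \<sigma> e"
  by (simp add: subst_eq_lin_ext lin_ext_single)

lemma subst_Const_mult: "subst \<sigma> (Const c * p) = Const c * subst \<sigma> p"
  by (simp add: subst_eq_lin_ext lin_ext_Const_mult)

lemma subst_Const [simp]: "subst \<sigma> (Const c) = Const c"
  using subst_single[of \<sigma> 0 c] by (simp add: Const_def)

lemma subst_Var [simp]: "subst \<sigma> (Var i) = \<sigma> i"
  by (simp add: Var_def subst_single subst_monom_single)

lemma subst_mult: "subst \<sigma> (p * q) = subst \<sigma> p * subst \<sigma> q"
proof -
  have "p * q = (\<Sum>e\<in>keys p. \<Sum>e'\<in>keys q. single e (lookup p e) * single e' (lookup q e'))"
    by (subst poly_mapping_sum_single[of p], subst poly_mapping_sum_single[of q])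
      (simp add: sum_distrib_left sum_distrib_right sum.swap[of _ "keys q"])
  hence "subst \<sigma> (p * q) = (\<Sum>e\<in>keys p. \<Sum>e'\<in>keys q.
      (Const (lookup p e) * subst_monom \<sigma> e) * (Const (lookup q e') * subst_monom \<sigma> e'))"
    by (simp add: subst_sum mult_single subst_single subst_monom_add Const_mult mult_ac)
  also have "\<dots> = (\<Sum>e\<in>keys p. Const (lookup p e) * subst_monom \<sigma> e) *
      (\<Sum>e'\<in>keys q. Const (lookup q e') * subst_monom \<sigma> e')"
    by (simp add: sum_distrib_left sum_distrib_right sum.swap[of _ "keys q"])
  finally show ?thesis by (simp add: subst_eq_lin_ext lin_ext_def)
qed

lemma subst_one [simp]: "subst \<sigma> 1 = 1"
  using subst_Const[of \<sigma> 1] by simp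

lemma subst_power: "subst \<sigma> (p ^ k) = subst \<sigma> p ^ k"
  by (induction k) (simp_all add: subst_mult)

definition Monom :: "(nat \<Rightarrow>\<^sub>0 nat) \<Rightarrow> 'k::comm_ring_1 mpoly" where
  "Monom e = single e 1"

lemma keys_Monom: "keys (Monom e :: 'k::comm_ring_1 mpoly) = {e}"
  by (simp add: Monom_def)

lemma lookup_Monom: "lookup (Monom e :: 'k::comm_ring_1 mpoly) \<mu> = (if e = \<mu> then 1 else 0)"
  by (simp add: Monom_def lookup_single when_def)

lemma Var_eq_Monom: "Var i = Monom (single i 1)"
  by (simp add: Var_def Monom_def)

lemma Monom_mult: "Monom a * Monom b = (Monom (a + b) :: 'k::comm_ring_1 mpoly)"
  by (simp add: Monom_def mult_single)

lemma single_eq_Const_mult_Monom: "single e c = Const c * Monom e"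
  by (simp add: Const_mult_single Monom_def)

lemma Var_power: "Var j ^ k = (Monom (single j k) :: 'k::comm_ring_1 mpoly)"
proof (induction k)
  case (Suc k)
  have "Var j ^ Suc k = Monom (single j 1) * (Monom (single j k) :: 'k mpoly)"
    by (simp only: power_Suc Suc flip: Var_eq_Monom)
  thus ?case by (simp add: Monom_mult single_add[symmetric])
qed (simp add: Monom_def)

lemma prod_Monom: "(\<Prod>i\<in>A. Monom (f i) :: 'k::comm_ring_1 mpoly) = Monom (\<Sum>i\<in>A. f i)"
  by (induction A rule: infinite_finite_induct) (simp_all add: Monom_def mult_single)

lemma single_eq_single_iff: "c \<noteq> 0 \<Longrightarrow> single k c = single k' c \<longleftrightarrow> k = k'"
  by (metis lookup_single_eq lookup_single_not_eq)

lemma lookup_single_nat: "lookup (single i k) x = (if x = i then k else (0::nat))"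
  by (simp add: lookup_single when_def)

lemma single_add_minus_single:
  "q \<le> lookup e j \<Longrightarrow> e - single j q + single j q = (e :: nat \<Rightarrow>\<^sub>0 nat)"
  by (rule poly_mapping_eqI) (simp add: lookup_add lookup_minus lookup_single_nat)

lemma keys_minus_single: "keys (e - single j q) \<subseteq> keys (e :: nat \<Rightarrow>\<^sub>0 nat)"
  by (auto simp: in_keys_iff lookup_minus)

lemma lookup_mult_Var:
  "lookup (P * Var j) \<mu> = (if 0 < lookup \<mu> j then lookup P (\<mu> - single j 1) else 0)"
proof -
  have "P * Var j = (\<Sum>e\<in>keys P. single (e + single j 1) (lookup P e))"
    by (subst poly_mapping_sum_single[of P]) (simp add: sum_distrib_right Var_def mult_single)
  hence L: "lookup (P * Var j) \<mu> = (\<Sum>e\<in>keys P. if e + single j 1 = \<mu> then lookup P e else 0)"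
    by (simp add: lookup_sum lookup_single when_def)
  show ?thesis
  proof (cases "0 < lookup \<mu> j")
    case True
    have "e + single j 1 = \<mu> \<longleftrightarrow> e = \<mu> - single j 1" for e
      using single_add_minus_single[of 1 \<mu> j] True by auto
    hence "lookup (P * Var j) \<mu> = (\<Sum>e\<in>keys P. if e = \<mu> - single j 1 then lookup P e else 0)"
      unfolding L by presburger
    also have "\<dots> = lookup P (\<mu> - single j 1)" by (simp add: in_keys_iff)
    finally show ?thesis using True by simp
  next
    case False
    have "e + single j 1 \<noteq> \<mu>" for e
      using False by (auto simp: lookup_add)
    thus ?thesis unfolding L using False by simp
  qed
qed

section \<open>Variables and ideals\<close>

lemma vars_in_zero [simp]: "vars_in S 0"
  by (simp add: vars_in_def)

lemma vars_in_add: "vars_in S p \<Longrightarrow> vars_in S q \<Longrightarrow> vars_in S (p + q)"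
  unfolding vars_in_def using keys_add[of p q] by blast

lemma vars_in_uminus: "vars_in S p \<Longrightarrow> vars_in S (- p)"
  by (simp add: vars_in_def)

lemma vars_in_diff: "vars_in S p \<Longrightarrow> vars_in S q \<Longrightarrow> vars_in S (p - q :: 'k::comm_ring_1 mpoly)"
  using vars_in_add[of S p "- q"] vars_in_uminus[of S q] by simp

lemma vars_in_single: "keys e \<subseteq> S \<Longrightarrow> vars_in S (single e c)"
  by (simp add: vars_in_def)

lemma vars_in_Const [simp]: "vars_in S (Const c)"
  by (simp add: vars_in_def Const_def)

lemma vars_in_Var: "i \<in> S \<Longrightarrow> vars_in S (Var i)"
  by (simp add: vars_in_def Var_def)

lemma vars_in_one [simp]: "vars_in S (1 :: 'k::comm_ring_1 mpoly)"
  using vars_in_Const[of S 1] by simp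

lemma vars_in_mult: "vars_in S p \<Longrightarrow> vars_in S q \<Longrightarrow> vars_in S (p * q)"
  unfolding vars_in_def
proof (intro ballI)
  fix m assume p: "\<forall>m\<in>keys p. keys m \<subseteq> S" and q: "\<forall>m\<in>keys q. keys m \<subseteq> S"
    and "m \<in> keys (p * q)"
  then obtain a b where "m = a + b" "a \<in> keys p" "b \<in> keys q"
    using keys_mult by blast
  thus "keys m \<subseteq> S"
    using p q keys_add[of a b] by blast
qed

lemma vars_in_sum: "(\<And>i. i \<in> A \<Longrightarrow> vars_in S (f i)) \<Longrightarrow> vars_in S (\<Sum>i\<in>A. f i)"
  by (induction A rule: infinite_finite_induct) (auto intro: vars_in_add)

lemma vars_in_prod:
  "(\<And>i. i \<in> A \<Longrightarrow> vars_in S (f i)) \<Longrightarrow> vars_in S (\<Prod>i\<in>A. f i :: 'k::comm_ring_1 mpoly)"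
  by (induction A rule: infinite_finite_induct) (auto intro: vars_in_mult)

lemma vars_in_power: "vars_in S p \<Longrightarrow> vars_in S (p ^ k :: 'k::comm_ring_1 mpoly)"
  by (induction k) (auto intro: vars_in_mult)

lemma vars_in_mono: "vars_in S p \<Longrightarrow> S \<subseteq> T \<Longrightarrow> vars_in T p"
  by (auto simp: vars_in_def)

lemma vars_in_subst:
  assumes "vars_in S p" "\<And>i. i \<in> S \<Longrightarrow> vars_in T (\<sigma> i)"
  shows "vars_in T (subst \<sigma> p)"
  unfolding subst_eq_lin_ext lin_ext_def subst_monom_def
proof (intro vars_in_sum vars_in_mult vars_in_Const vars_in_prod vars_in_power)
  fix e i assume "e \<in> keys p" "i \<in> keys e"
  hence "i \<in> S"
    using assms(1) by (auto simp: vars_in_def)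
  thus "vars_in T (\<sigma> i)"
    using assms(2) by blast
qed

lemma lookup_eq_zero_if_not_vars_in:
  "vars_in S p \<Longrightarrow> x \<in> keys \<mu> \<Longrightarrow> x \<notin> S \<Longrightarrow> lookup p \<mu> = 0"
  by (metis in_keys_iff subsetD vars_in_def)

lemma ideal_genI:
  "finite F \<Longrightarrow> F \<subseteq> G \<Longrightarrow> \<forall>g\<in>F. vars_in S (h g) \<Longrightarrow> x = (\<Sum>g\<in>F. h g * g) \<Longrightarrow> x \<in> ideal_gen S G"
  unfolding ideal_gen_def by (intro CollectI exI conjI)

lemma ideal_genE:
  assumes "x \<in> ideal_gen S G"
  obtains F h where "finite F" "F \<subseteq> G" "\<forall>g\<in>F. vars_in S (h g)" "x = (\<Sum>g\<in>F. h g * g)"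
  using assms unfolding ideal_gen_def by (auto simp only: mem_Collect_eq)

lemma ideal_gen_zero: "0 \<in> ideal_gen S G"
  by (rule ideal_genI[of "{}"]) simp_all

lemma ideal_gen_generator: "g \<in> G \<Longrightarrow> vars_in S h \<Longrightarrow> h * g \<in> ideal_gen S G"
  by (rule ideal_genI[of "{g}" _ _ "\<lambda>_. h"]) simp_all

lemma ideal_gen_add:
  assumes "x \<in> ideal_gen S G" "y \<in> ideal_gen S G"
  shows "x + y \<in> ideal_gen S G"
proof -
  obtain F1 h1 where 1: "finite F1" "F1 \<subseteq> G" "\<forall>g\<in>F1. vars_in S (h1 g)" "x = (\<Sum>g\<in>F1. h1 g * g)"
    using assms(1) by (rule ideal_genE)
  obtain F2 h2 where 2: "finite F2" "F2 \<subseteq> G" "\<forall>g\<in>F2. vars_in S (h2 g)" "y = (\<Sum>g\<in>F2. h2 g * g)"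
    using assms(2) by (rule ideal_genE)
  define h where "h g = (if g \<in> F1 then h1 g else 0) + (if g \<in> F2 then h2 g else 0)" for g
  have "(\<Sum>g\<in>F1 \<union> F2. h g * g) = (\<Sum>g\<in>F1 \<union> F2. if g \<in> F1 then h1 g * g else 0)
      + (\<Sum>g\<in>F1 \<union> F2. if g \<in> F2 then h2 g * g else 0)"
    unfolding sum.distrib[symmetric] by (rule sum.cong) (simp_all add: h_def distrib_right)
  also have "(\<Sum>g\<in>F1 \<union> F2. if g \<in> F1 then h1 g * g else 0) = x"
    unfolding 1(4) using 1(1) 2(1) by (intro sum.mono_neutral_cong_right) auto
  also have "(\<Sum>g\<in>F1 \<union> F2. if g \<in> F2 then h2 g * g else 0) = y"
    unfolding 2(4) using 1(1) 2(1) by (intro sum.mono_neutral_cong_right) auto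
  finally have "x + y = (\<Sum>g\<in>F1 \<union> F2. h g * g)" by simp
  moreover have "\<forall>g\<in>F1 \<union> F2. vars_in S (h g)"
    using 1(3) 2(3) by (auto simp: h_def intro!: vars_in_add)
  ultimately show ?thesis
    using 1(1,2) 2(1,2) by (intro ideal_genI) simp_all
qed

lemma ideal_gen_mult:
  assumes "x \<in> ideal_gen S G" "vars_in S h"
  shows "h * x \<in> ideal_gen S G"
proof -
  obtain F h1 where F: "finite F" "F \<subseteq> G" "\<forall>g\<in>F. vars_in S (h1 g)" "x = (\<Sum>g\<in>F. h1 g * g)"
    using assms(1) by (rule ideal_genE)
  have "h * x = (\<Sum>g\<in>F. (h * h1 g) * g)"
    using F(4) by (simp add: sum_distrib_left mult.assoc)
  thus ?thesis
    using F assms(2) by (intro ideal_genI[of F]) (auto intro: vars_in_mult)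
qed

lemma ideal_gen_uminus: "x \<in> ideal_gen S G \<Longrightarrow> - x \<in> ideal_gen S G"
  using ideal_gen_mult[of x S G "- 1"] by (simp add: vars_in_uminus)

lemma ideal_gen_diff: "x \<in> ideal_gen S G \<Longrightarrow> y \<in> ideal_gen S G \<Longrightarrow> x - y \<in> ideal_gen S G"
  using ideal_gen_add[of x S G "- y"] ideal_gen_uminus[of y] by simp

lemma ideal_gen_sum: "(\<And>i. i \<in> A \<Longrightarrow> f i \<in> ideal_gen S G) \<Longrightarrow> (\<Sum>i\<in>A. f i) \<in> ideal_gen S G"
  by (induction A rule: infinite_finite_induct) (auto intro: ideal_gen_add ideal_gen_zero)

lemma ideal_gen_Const_mult: "x \<in> ideal_gen S G \<Longrightarrow> Const c * x \<in> ideal_gen S G"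
  by (rule ideal_gen_mult) simp_all

lemma ideal_gen_mono: "S \<subseteq> T \<Longrightarrow> G \<subseteq> G' \<Longrightarrow> ideal_gen S G \<subseteq> ideal_gen T G'"
  by (auto elim!: ideal_genE intro!: ideal_genI intro: vars_in_mono)

lemma ideal_gen_subset:
  assumes "G \<subseteq> ideal_gen S G'"
  shows "ideal_gen S G \<subseteq> ideal_gen S G'"
proof
  fix x assume "x \<in> ideal_gen S G"
  then obtain F h where F: "finite F" "F \<subseteq> G" "\<forall>g\<in>F. vars_in S (h g)" "x = (\<Sum>g\<in>F. h g * g)"
    by (rule ideal_genE)
  show "x \<in> ideal_gen S G'"
    unfolding F(4) using F assms by (intro ideal_gen_sum ideal_gen_mult) auto
qed

lemma ideal_gen_subst:
  assumes "\<And>i. i \<in> S \<Longrightarrow> vars_in T (\<sigma> i)" "\<And>g. g \<in> G \<Longrightarrow> subst \<sigma> g \<in> ideal_gen T G'"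
    and "x \<in> ideal_gen S G"
  shows "subst \<sigma> x \<in> ideal_gen T G'"
proof -
  obtain F h where F: "finite F" "F \<subseteq> G" "\<forall>g\<in>F. vars_in S (h g)" "x = (\<Sum>g\<in>F. h g * g)"
    using assms(3) by (rule ideal_genE)
  have "subst \<sigma> x = (\<Sum>g\<in>F. subst \<sigma> (h g) * subst \<sigma> g)"
    using F by (simp add: subst_sum subst_mult)
  also have "\<dots> \<in> ideal_gen T G'"
    using F assms by (intro ideal_gen_sum ideal_gen_mult vars_in_subst[of S]) auto
  finally show ?thesis .
qed

lemma CHAR_eq_prime:
  assumes "prime p" "of_nat p = (0::'k::field)"
  shows "CHAR('k) = p"
proof -
  have "CHAR('k) dvd p" "CHAR('k) \<noteq> 1"
    using assms(2) of_nat_CHAR[where 'a='k] by (auto simp: of_nat_eq_0_iff_char_dvd)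
  thus ?thesis
    using assms(1) unfolding prime_nat_iff by blast
qed

lemma CHAR_mpoly:
  assumes "prime p" "of_nat p = (0::'k::field)"
  shows "CHAR('k mpoly) = p"
proof (rule CHAR_eqI)
  show "of_nat p = (0 :: 'k mpoly)"
    using assms by (simp add: of_nat_mpoly)
  fix x assume "of_nat x = (0 :: 'k mpoly)"
  hence "lookup (Const (of_nat x :: 'k)) 0 = 0"
    by (simp add: of_nat_mpoly)
  hence "of_nat x = (0::'k)"
    by (simp add: Const_def lookup_of_nat)
  thus "p dvd x"
    using CHAR_eq_prime[OF assms] by (simp add: of_nat_eq_0_iff_char_dvd)
qed

lemma val_ring_iff: "x \<in> val_ring v \<longleftrightarrow> x = 0 \<or> 0 \<le> v x"
  by (simp add: val_ring_def vball_def)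

lemma discrete_valuation_one: "discrete_valuation v \<Longrightarrow> v 1 = 0"
proof -
  assume "discrete_valuation v"
  hence "v (1 * 1) = v 1 + v 1"
    unfolding discrete_valuation_def by (simp only: one_neq_zero not_False_eq_True simp_thms)
  thus ?thesis by simp
qed

lemma val_ring_zero [simp]: "0 \<in> val_ring v"
  by (simp add: val_ring_iff)

lemma val_ring_one: "discrete_valuation v \<Longrightarrow> 1 \<in> val_ring v"
  by (simp add: val_ring_iff discrete_valuation_one)

lemma val_ring_mult:
  "discrete_valuation v \<Longrightarrow> x \<in> val_ring v \<Longrightarrow> y \<in> val_ring v \<Longrightarrow> x * y \<in> val_ring v"
proof (cases "x = 0 \<or> y = 0")
  case False
  assume "discrete_valuation v" "x \<in> val_ring v" "y \<in> val_ring v"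
  thus ?thesis
    using False unfolding val_ring_iff discrete_valuation_def by (metis add_nonneg_nonneg)
qed (auto simp: val_ring_iff)

lemma val_ring_add:
  "discrete_valuation v \<Longrightarrow> x \<in> val_ring v \<Longrightarrow> y \<in> val_ring v \<Longrightarrow> x + y \<in> val_ring v"
proof (cases "x = 0 \<or> y = 0 \<or> x + y = 0")
  case False
  assume d: "discrete_valuation v" and "x \<in> val_ring v" "y \<in> val_ring v"
  hence "0 \<le> v x" "0 \<le> v y"
    using False by (auto simp: val_ring_iff)
  moreover have "min (v x) (v y) \<le> v (x + y)"
    using d False unfolding discrete_valuation_def by blast
  ultimately show ?thesis
    unfolding val_ring_iff by linarith
qed (auto simp: val_ring_iff)

lemma val_ring_sum:
  "discrete_valuation v \<Longrightarrow> (\<And>i. i \<in> A \<Longrightarrow> f i \<in> val_ring v) \<Longrightarrow> (\<Sum>i\<in>A. f i) \<in> val_ring v"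
  by (induction A rule: infinite_finite_induct) (auto intro: val_ring_add)

section \<open>Normal forms modulo the Frobenius relations\<close>

text \<open>The relation \<Phi>(e_j \<otimes> 1) = e_j^q of A[M], written in the variables off, ..., off + n - 1.\<close>
definition frob_rel :: "nat \<Rightarrow> nat \<Rightarrow> (nat \<Rightarrow> nat \<Rightarrow> 'k::comm_ring_1) \<Rightarrow> nat \<Rightarrow> nat \<Rightarrow> 'k mpoly" where
  "frob_rel q n C off j = Var (off + j) ^ q - (\<Sum>i<n. Const (C i j) * Var (off + i))"

abbreviation frob_ideal :: "nat \<Rightarrow> nat \<Rightarrow> (nat \<Rightarrow> nat \<Rightarrow> 'k::comm_ring_1) \<Rightarrow> 'k mpoly set" where
  "frob_ideal q m D \<equiv> ideal_gen {..<m} {frob_rel q m D 0 j | j. j < m}"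

lemma frob_rel_in_frob_ideal: "j < m \<Longrightarrow> frob_rel q m D 0 j \<in> frob_ideal q m D"
  using ideal_gen_generator[of "frob_rel q m D 0 j" "{frob_rel q m D 0 j | j. j < m}" "{..<m}" 1]
  by auto

definition total_degree :: "(nat \<Rightarrow>\<^sub>0 nat) \<Rightarrow> nat" where
  "total_degree e = (\<Sum>i\<in>keys e. lookup e i)"

lemma total_degree_superset:
  "finite S \<Longrightarrow> keys e \<subseteq> S \<Longrightarrow> total_degree e = (\<Sum>i\<in>S. lookup e i)"
  unfolding total_degree_def by (rule sum.mono_neutral_left) (auto simp: in_keys_iff)

lemma total_degree_add: "total_degree (a + b) = total_degree a + total_degree b"
proof -
  let ?S = "keys a \<union> keys b"
  have "total_degree (a + b) = (\<Sum>i\<in>?S. lookup (a + b) i)"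
    by (rule total_degree_superset) (auto dest: set_mp[OF keys_add])
  also have "\<dots> = (\<Sum>i\<in>?S. lookup a i) + (\<Sum>i\<in>?S. lookup b i)"
    by (simp add: lookup_add sum.distrib)
  also have "\<dots> = total_degree a + total_degree b"
    by (simp add: total_degree_superset[of ?S a] total_degree_superset[of ?S b])
  finally show ?thesis .
qed

lemma total_degree_single [simp]: "total_degree (single i k) = k"
  by (simp add: total_degree_def)

lemma total_degree_reduction_step:
  assumes "2 \<le> q" "q \<le> lookup e j"
  shows "total_degree (e - single j q + single i 1) < total_degree e"
  using total_degree_add[of "e - single j q" "single j q"] single_add_minus_single[OF assms(2)]
    total_degree_add[of "e - single j q" "single i 1"] assms(1) by simp

definition reduced :: "nat \<Rightarrow> nat \<Rightarrow> (nat \<Rightarrow>\<^sub>0 nat) \<Rightarrow> bool" where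
  "reduced q m e \<longleftrightarrow> (\<forall>j<m. lookup e j < q)"

abbreviation reduced_poly :: "nat \<Rightarrow> nat \<Rightarrow> 'k::zero mpoly \<Rightarrow> bool" where
  "reduced_poly q m p \<equiv> \<forall>\<mu>\<in>keys p. reduced q m \<mu>"

definition pivot :: "nat \<Rightarrow> nat \<Rightarrow> (nat \<Rightarrow>\<^sub>0 nat) \<Rightarrow> nat" where
  "pivot q m e = (LEAST j. j < m \<and> q \<le> lookup e j)"

lemma pivot: "\<not> reduced q m e \<Longrightarrow> pivot q m e < m \<and> q \<le> lookup e (pivot q m e)"
  unfolding reduced_def pivot_def by (rule LeastI_ex) (auto simp: not_less)

text \<open>Rewrite x_j^q to \<Sum>_i D i j x_i at the pivot j; the guard q < 2 only serves termination.\<close>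
function nf_monom :: "nat \<Rightarrow> nat \<Rightarrow> (nat \<Rightarrow> nat \<Rightarrow> 'k::comm_ring_1) \<Rightarrow> (nat \<Rightarrow>\<^sub>0 nat) \<Rightarrow> 'k mpoly" where
  "nf_monom q m D e = (if q < 2 \<or> reduced q m e then Monom e else
     (\<Sum>i<m. Const (D i (pivot q m e)) * nf_monom q m D (e - single (pivot q m e) q + single i 1)))"
  by auto
termination
proof (relation "measure (\<lambda>(q, m, D, e). total_degree e)")
  fix q m D e i
  assume "\<not> (q < 2 \<or> reduced q m e)"
  thus "((q, m, D, e - single (pivot q m e) q + single i 1), q, m, D, e) \<in> measure (\<lambda>(q, m, D, e). total_degree e)"
    using pivot[of q m e] total_degree_reduction_step[of q e "pivot q m e" i] by auto
qed simp

declare nf_monom.simps [simp del]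

lemma nf_monom_reduced: "reduced q m e \<Longrightarrow> nf_monom q m D e = Monom e"
  by (simp add: nf_monom.simps)

lemma nf_monom_pivot: "2 \<le> q \<Longrightarrow> \<not> reduced q m e \<Longrightarrow>
   nf_monom q m D e = (\<Sum>i<m. Const (D i (pivot q m e)) * nf_monom q m D (e - single (pivot q m e) q + single i 1))"
  by (subst nf_monom.simps) simp

lemma reduction_steps_commute:
  assumes "q \<le> lookup e j" "q \<le> lookup e k" "j \<noteq> k"
  shows "e - single j q + single i 1 - single k q + single l 1
       = e - single k q + single l 1 - single j q + (single i 1 :: nat \<Rightarrow>\<^sub>0 nat)"
  by (rule poly_mapping_eqI) (use assms in \<open>auto simp: lookup_add lookup_minus lookup_single_nat\<close>)

text \<open>Confluence: the normal form does not depend on which exponent \<ge> q is reduced first.\<close>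
lemma nf_monom_step:
  assumes q: "2 \<le> q" and k: "k < m" "q \<le> lookup e k"
  shows "nf_monom q m D e = (\<Sum>i<m. Const (D i k) * nf_monom q m D (e - single k q + single i 1))"
  using k
proof (induction "total_degree e" arbitrary: e k rule: less_induct)
  case less
  have nr: "\<not> reduced q m e"
    using less.prems by (auto simp: reduced_def)
  define j where "j = pivot q m e"
  have j: "j < m" "q \<le> lookup e j"
    using pivot[OF nr] by (auto simp: j_def)
  have e: "nf_monom q m D e = (\<Sum>i<m. Const (D i j) * nf_monom q m D (e - single j q + single i 1))"
    unfolding j_def by (rule nf_monom_pivot[OF q nr])
  show ?case
  proof (cases "j = k")
    case False
    have A: "nf_monom q m D (e - single j q + single i 1) = (\<Sum>l<m. Const (D l k) *
        nf_monom q m D (e - single j q + single i 1 - single k q + single l 1))" for i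
      using less.prems False
      by (intro less.hyps total_degree_reduction_step[OF q j(2)]) (simp_all add: lookup_add lookup_minus lookup_single_nat)
    have B: "nf_monom q m D (e - single k q + single l 1) = (\<Sum>i<m. Const (D i j) *
        nf_monom q m D (e - single k q + single l 1 - single j q + single i 1))" for l
      using less.prems j False
      by (intro less.hyps total_degree_reduction_step[OF q less.prems(2)]) (simp_all add: lookup_add lookup_minus lookup_single_nat)
    have "nf_monom q m D e = (\<Sum>i<m. \<Sum>l<m. Const (D i j) * Const (D l k) *
        nf_monom q m D (e - single j q + single i 1 - single k q + single l 1))"
      by (simp only: e A sum_distrib_left mult.assoc)
    also have "\<dots> = (\<Sum>l<m. \<Sum>i<m. Const (D l k) * Const (D i j) *
        nf_monom q m D (e - single k q + single l 1 - single j q + single i 1))"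
      by (subst sum.swap) (intro sum.cong refl,
          simp only: reduction_steps_commute[OF j(2) less.prems(2) False] mult.commute)
    also have "\<dots> = (\<Sum>l<m. Const (D l k) * nf_monom q m D (e - single k q + single l 1))"
      by (simp only: B sum_distrib_left mult.assoc)
    finally show ?thesis .
  qed (use e in simp)
qed

definition nf :: "nat \<Rightarrow> nat \<Rightarrow> (nat \<Rightarrow> nat \<Rightarrow> 'k::comm_ring_1) \<Rightarrow> 'k mpoly \<Rightarrow> 'k mpoly" where
  "nf q m D = lin_ext (nf_monom q m D)"

lemma nf_single: "nf q m D (single e c) = Const c * nf_monom q m D e"
  by (simp add: nf_def lin_ext_single)

lemma nf_diff: "nf q m D (x - y) = nf q m D x - nf q m D y"
  by (simp add: nf_def lin_ext_diff)

lemma nf_sum: "nf q m D (\<Sum>i\<in>A. f i) = (\<Sum>i\<in>A. nf q m D (f i))"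
  by (simp add: nf_def lin_ext_sum)

lemma lookup_nf: "lookup (nf q m D p) \<mu> = (\<Sum>e\<in>keys p. lookup p e * lookup (nf_monom q m D e) \<mu>)"
  by (simp add: nf_def lin_ext_def lookup_sum lookup_Const_mult)

lemma nf_single_mult_frob_rel:
  fixes D :: "nat \<Rightarrow> nat \<Rightarrow> 'k::comm_ring_1"
  assumes q: "2 \<le> q" and j: "j < m"
  shows "nf q m D (single e c * frob_rel q m D 0 j) = 0"
proof -
  have 1: "single e c * Var j ^ q = (single (e + single j q) c :: 'k mpoly)"
    by (simp add: Var_power Monom_def mult_single)
  have 2: "single e c * (Const (D i j) * Var i) = (single (e + single i 1) (c * D i j) :: 'k mpoly)" for i
    by (simp add: Var_def Const_def mult_single mult.commute mult.left_commute)
  have "nf_monom q m D (e + single j q) = (\<Sum>i<m. Const (D i j) * nf_monom q m D (e + single i 1))"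
    using nf_monom_step[OF q j, of "e + single j q"] by (simp add: lookup_add)
  thus ?thesis
    unfolding frob_rel_def add_0 right_diff_distrib sum_distrib_left nf_diff nf_sum 1 2 nf_single
    by (simp add: Const_mult mult.assoc sum_distrib_left)
qed

lemma nf_frob_ideal:
  assumes q: "2 \<le> q" and x: "x \<in> frob_ideal q m D"
  shows "nf q m D x = 0"
proof -
  obtain F h where F: "finite F" "F \<subseteq> {frob_rel q m D 0 j | j. j < m}" "x = (\<Sum>g\<in>F. h g * g)"
    using x by (rule ideal_genE)
  have "nf q m D (h g * g) = 0" if g: "g \<in> F" for g
  proof -
    obtain j where j: "j < m" "g = frob_rel q m D 0 j"
      using F(2) g by blast
    have "h g * g = (\<Sum>e\<in>keys (h g). single e (lookup (h g) e) * g)"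
      by (subst poly_mapping_sum_single[of "h g"]) (simp add: sum_distrib_right)
    thus ?thesis
      using j by (simp add: nf_sum nf_single_mult_frob_rel[OF q j(1)])
  qed
  thus ?thesis
    using F(3) by (simp add: nf_sum)
qed

lemma keys_reduction_step:
  "i < m \<Longrightarrow> keys (e - single j q + single i 1) \<subseteq> keys e \<union> {..<m}" for e :: "nat \<Rightarrow>\<^sub>0 nat"
  by (auto simp: in_keys_iff lookup_add lookup_minus lookup_single_nat split: if_splits)

lemma keys_nf_monom:
  assumes q: "2 \<le> q"
  shows "keys (nf_monom q m D e) \<subseteq> {\<mu>. reduced q m \<mu> \<and> keys \<mu> \<subseteq> keys e \<union> {..<m}}"
  using q
proof (induction q m D e rule: nf_monom.induct)
  case (1 q m D e)
  show ?case
  proof (cases "reduced q m e")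
    case True
    thus ?thesis by (simp add: nf_monom_reduced keys_Monom)
  next
    case False
    let ?e = "\<lambda>i. e - single (pivot q m e) q + single i 1"
    have IH: "keys (nf_monom q m D (?e i)) \<subseteq> {\<mu>. reduced q m \<mu> \<and> keys \<mu> \<subseteq> keys e \<union> {..<m}}"
      if "i < m" for i
      using "1.IH"[of i] "1.prems" False keys_reduction_step[OF that, of e "pivot q m e" q] that
      by auto
    have "keys (nf_monom q m D e) \<subseteq> (\<Union>i<m. keys (Const (D i (pivot q m e)) * nf_monom q m D (?e i)))"
      unfolding nf_monom_pivot[OF "1.prems" False] by (rule keys_sum)
    also have "\<dots> \<subseteq> (\<Union>i<m. keys (nf_monom q m D (?e i)))"
      using keys_Const_mult by blast
    finally show ?thesis
      using IH by blast
  qed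
qed

lemma coeffs_in_nf_monom:
  assumes d: "discrete_valuation v" and D: "\<forall>i<m. \<forall>j<m. D i j \<in> val_ring v" and q: "2 \<le> q"
  shows "coeffs_in (val_ring v) (nf_monom q m D e)"
  using q D
proof (induction q m D e rule: nf_monom.induct)
  case (1 q m D e)
  show ?case
  proof (cases "reduced q m e")
    case True
    thus ?thesis
      using d by (simp add: nf_monom_reduced coeffs_in_def lookup_Monom val_ring_one)
  next
    case False
    have "lookup (nf_monom q m D e) \<mu> \<in> val_ring v" for \<mu>
      unfolding nf_monom_pivot[OF "1.prems"(1) False] lookup_sum lookup_Const_mult
      using "1.IH" "1.prems" False pivot[OF False]
      by (intro val_ring_sum[OF d] val_ring_mult[OF d]) (auto simp: coeffs_in_def)
    thus ?thesis
      by (simp add: coeffs_in_def)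
  qed
qed

lemma coeffs_in_nf:
  assumes d: "discrete_valuation v" and D: "\<forall>i<m. \<forall>j<m. D i j \<in> val_ring v" and q: "2 \<le> q"
    and p: "coeffs_in (val_ring v) p"
  shows "coeffs_in (val_ring v) (nf q m D p)"
  unfolding coeffs_in_def lookup_nf using p coeffs_in_nf_monom[OF d D q]
  by (intro allI val_ring_sum[OF d] val_ring_mult[OF d]) (auto simp: coeffs_in_def)

lemma Monom_minus_nf_monom_in_frob_ideal:
  fixes D :: "nat \<Rightarrow> nat \<Rightarrow> 'k::comm_ring_1"
  assumes q: "2 \<le> q" and e: "keys e \<subseteq> {..<m}"
  shows "Monom e - nf_monom q m D e \<in> frob_ideal q m D"
  using q e
proof (induction q m D e rule: nf_monom.induct)
  case (1 q m D e)
  show ?case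
  proof (cases "reduced q m e")
    case True
    thus ?thesis by (simp add: nf_monom_reduced ideal_gen_zero)
  next
    case False
    define j where "j = pivot q m e"
    have j: "j < m" "q \<le> lookup e j"
      using pivot[OF False] by (auto simp: j_def)
    define e' where "e' i = e - single j q + single i 1" for i
    have IH: "Monom (e' i) - nf_monom q m D (e' i) \<in> frob_ideal q m D" if "i < m" for i
      using "1.IH"[of i] "1.prems" False that keys_reduction_step[OF that, of e j q]
      unfolding e'_def j_def by auto
    have "Monom e = Monom (e - single j q) * (Var j ^ q :: 'k mpoly)"
      by (simp add: Var_power Monom_mult single_add_minus_single[OF j(2)])
    moreover have "Monom (e - single j q) * (\<Sum>i<m. Const (D i j) * Var i)
        = (\<Sum>i<m. Const (D i j) * (Monom (e' i) :: 'k mpoly))"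
      by (simp add: sum_distrib_left e'_def Var_eq_Monom Monom_mult mult.left_commute)
    ultimately have "Monom e - nf_monom q m D e = Monom (e - single j q) * frob_rel q m D 0 j
        + (\<Sum>i<m. Const (D i j) * (Monom (e' i) - nf_monom q m D (e' i)))"
      unfolding frob_rel_def right_diff_distrib sum_subtractf
      by (subst nf_monom_pivot[OF "1.prems"(1) False]) (simp add: e'_def j_def)
    also have "\<dots> \<in> frob_ideal q m D"
      using j(1) keys_minus_single[of e j q] "1.prems"(2) IH
      by (intro ideal_gen_add ideal_gen_generator ideal_gen_sum ideal_gen_Const_mult)
        (auto simp: Monom_def intro!: vars_in_single)
    finally show ?thesis .
  qed
qed

lemma minus_nf_in_frob_ideal:
  assumes q: "2 \<le> q" and p: "vars_in {..<m} p"
  shows "p - nf q m D p \<in> frob_ideal q m D"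
proof -
  have "p - nf q m D p = (\<Sum>e\<in>keys p. Const (lookup p e) * (Monom e - nf_monom q m D e))"
    by (subst (1) poly_mapping_sum_single)
      (simp add: nf_def lin_ext_def single_eq_Const_mult_Monom right_diff_distrib sum_subtractf)
  also have "\<dots> \<in> frob_ideal q m D"
    using p by (intro ideal_gen_sum ideal_gen_Const_mult Monom_minus_nf_monom_in_frob_ideal[OF q])
      (auto simp: vars_in_def)
  finally show ?thesis .
qed

lemma nf_eq_self: "reduced_poly q m p \<Longrightarrow> nf q m D p = p"
  by (subst (2) poly_mapping_sum_single)
    (simp add: nf_def lin_ext_def nf_monom_reduced single_eq_Const_mult_Monom)

lemma keys_nf:
  assumes q: "2 \<le> q" and \<mu>: "\<mu> \<in> keys (nf q m D p)"
  shows "reduced q m \<mu> \<and> (\<exists>e\<in>keys p. keys \<mu> \<subseteq> keys e \<union> {..<m})"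
proof -
  have "\<mu> \<in> (\<Union>e\<in>keys p. keys (Const (lookup p e) * nf_monom q m D e))"
    using \<mu> unfolding nf_def lin_ext_def by (rule subsetD[OF keys_sum])
  then obtain e where "e \<in> keys p" "\<mu> \<in> keys (nf_monom q m D e)"
    using keys_Const_mult by blast
  thus ?thesis
    using keys_nf_monom[OF q] by blast
qed

lemma reduced_nf: "2 \<le> q \<Longrightarrow> reduced_poly q m (nf q m D p)"
  using keys_nf by blast

lemma vars_in_nf:
  assumes q: "2 \<le> q" and p: "vars_in S p" and m: "{..<m} \<subseteq> S"
  shows "vars_in S (nf q m D p)"
  using keys_nf[OF q] p m unfolding vars_in_def by blast

lemma reduced_eq_if_frob_ideal:
  assumes "2 \<le> q" "reduced_poly q m a" "reduced_poly q m b" "a - b \<in> frob_ideal q m D"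
  shows "a = b"
  using nf_frob_ideal[OF assms(1,4)] by (simp add: nf_diff nf_eq_self assms(2,3))

section \<open>The ideals of relations of A[M]_K and of A[M]_K \<otimes> A[M]_K\<close>

definition block_diag :: "nat \<Rightarrow> (nat \<Rightarrow> nat \<Rightarrow> 'k::zero) \<Rightarrow> nat \<Rightarrow> nat \<Rightarrow> 'k" where
  "block_diag n C i j = (if i < n \<and> j < n then C i j
     else if n \<le> i \<and> i < 2 * n \<and> n \<le> j \<and> j < 2 * n then C (i - n) (j - n) else 0)"

lemma sum_lessThan_double:
  fixes f :: "nat \<Rightarrow> 'a::comm_monoid_add"
  shows "(\<Sum>i<2 * n. f i) = (\<Sum>i<n. f i) + (\<Sum>i<n. f (n + i))"
proof -
  have "(\<Sum>i<a + b. f i) = (\<Sum>i<a. f i) + (\<Sum>i<b. f (a + i))" for a b :: nat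
    by (induction b) (simp_all add: add.assoc)
  thus ?thesis
    by (simp add: mult_2)
qed

lemma frob_rel_block_diag_low:
  "j < n \<Longrightarrow> frob_rel q (2 * n) (block_diag n C) 0 j = frob_rel q n C 0 j"
  by (simp add: frob_rel_def sum_lessThan_double block_diag_def)

lemma frob_rel_block_diag_high:
  "j < n \<Longrightarrow> frob_rel q (2 * n) (block_diag n C) 0 (n + j) = frob_rel q n C n j"
  by (simp add: frob_rel_def sum_lessThan_double block_diag_def)

lemma frob_rel_in_frob_ideal_block_diag:
  assumes "j < n"
  shows "frob_rel q n C 0 j \<in> frob_ideal q (2 * n) (block_diag n C)"
    and "frob_rel q n C n j \<in> frob_ideal q (2 * n) (block_diag n C)"
  using assms frob_rel_in_frob_ideal[of j "2 * n" q "block_diag n C"]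
    frob_rel_in_frob_ideal[of "n + j" "2 * n" q "block_diag n C"]
  by (simp_all add: frob_rel_block_diag_low frob_rel_block_diag_high)

lemma block_diag_in_val_ring:
  assumes "\<forall>i<n. \<forall>j<n. C i j \<in> val_ring v"
  shows "\<forall>i<2 * n. \<forall>j<2 * n. block_diag n C i j \<in> val_ring v"
  using assms by (auto simp: block_diag_def)

lemma frob_rel_in_ideal_gen_rels:
  fixes C :: "nat \<Rightarrow> nat \<Rightarrow> 'k::field"
  assumes d: "discrete_valuation v" and j: "j < n" and q: "0 < q"
  shows "frob_rel q n C off j \<in> ideal_gen S (rels q n v C off)"
proof -
  let ?a = "\<lambda>i. if i = j then 1 else (0::'k)"
  have "PhiM q n C off ?a = (\<Sum>i<n. if i = j then elemM n off (\<lambda>l. C l i) else 0)"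
    unfolding PhiM_def using q by (intro sum.cong) (auto simp: power_0_left)
  moreover have "elemM n off ?a = (\<Sum>i<n. if i = j then Var (off + i) else 0)"
    unfolding elemM_def by (intro sum.cong) auto
  ultimately have "- frob_rel q n C off j = PhiM q n C off ?a - elemM n off ?a ^ q"
    using j by (simp add: frob_rel_def elemM_def)
  moreover have "\<forall>i. ?a i \<in> val_ring v"
    using val_ring_one[OF d] by simp
  ultimately have "- frob_rel q n C off j \<in> rels q n v C off"
    unfolding rels_def by blast
  thus ?thesis
    using ideal_gen_uminus[OF ideal_gen_generator[of _ _ S 1]] by fastforce
qed

lemma frob_ideal_subset_block_diag: "frob_ideal q n C \<subseteq> frob_ideal q (2 * n) (block_diag n C)"
proof -
  have "frob_ideal q n C \<subseteq> ideal_gen {..<2 * n} {frob_rel q n C 0 j | j. j < n}"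
    by (rule ideal_gen_mono) auto
  also have "\<dots> \<subseteq> frob_ideal q (2 * n) (block_diag n C)"
    by (rule ideal_gen_subset) (auto intro: frob_rel_in_frob_ideal_block_diag)
  finally show ?thesis .
qed

lemma subst_frob_rel: "subst \<sigma> (frob_rel q n C 0 j) = \<sigma> j ^ q - (\<Sum>i<n. Const (C i j) * \<sigma> i)"
  by (simp add: frob_rel_def subst_diff subst_power subst_sum subst_Const_mult)

lemma one_tensor_frob_ideal:
  assumes "x \<in> frob_ideal q n C"
  shows "one_tensor n x \<in> frob_ideal q (2 * n) (block_diag n C)"
  unfolding one_tensor_def
proof (rule ideal_gen_subst[OF _ _ assms])
  fix g assume "g \<in> {frob_rel q n C 0 j | j. j < n}"
  then obtain j where j: "j < n" "g = frob_rel q n C 0 j"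
    by blast
  have "subst (\<lambda>i. Var (n + i)) g = frob_rel q n C n j"
    unfolding j(2) subst_frob_rel by (simp add: frob_rel_def)
  thus "subst (\<lambda>i. Var (n + i)) g \<in> frob_ideal q (2 * n) (block_diag n C)"
    using frob_rel_in_frob_ideal_block_diag(2)[OF j(1)] by simp
qed (auto intro: vars_in_Var)

lemma scal_act_frob_ideal:
  assumes x: "x \<in> frob_ideal q n C" and \<alpha>: "\<alpha> ^ q = \<alpha>"
  shows "scal_act \<alpha> x \<in> frob_ideal q n C"
  unfolding scal_act_def
proof (rule ideal_gen_subst[OF _ _ x])
  fix g assume "g \<in> {frob_rel q n C 0 j | j. j < n}"
  then obtain j where j: "j < n" "g = frob_rel q n C 0 j"
    by blast
  have "subst (\<lambda>i. Const \<alpha> * Var i) g = Const \<alpha> * frob_rel q n C 0 j"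
    unfolding j(2) subst_frob_rel using \<alpha>
    by (simp add: frob_rel_def power_mult_distrib Const_power[symmetric] right_diff_distrib
        sum_distrib_left mult_ac)
  thus "subst (\<lambda>i. Const \<alpha> * Var i) g \<in> frob_ideal q n C"
    using j(1) by (simp add: ideal_gen_Const_mult frob_rel_in_frob_ideal)
qed (auto intro!: vars_in_mult vars_in_Var)

lemma delta_plus_diff: "delta_plus n (x - y) = delta_plus n x - delta_plus n y"
  by (simp add: delta_plus_def Delta_def one_tensor_def subst_diff)

lemma vars_in_elemM: "vars_in {..<n} (elemM n 0 c)"
  unfolding elemM_def by (intro vars_in_sum vars_in_mult vars_in_Const vars_in_Var) auto

lemma delta_plus_elemM: "delta_plus n (elemM n 0 c) = 0"
  by (simp add: delta_plus_def Delta_def one_tensor_def elemM_def subst_sum subst_Const_mult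
      distrib_left sum.distrib)

lemma prime_power_ge_2: "prime (p::nat) \<Longrightarrow> 1 \<le> r \<Longrightarrow> 2 \<le> p ^ r"
  using power_increasing[of 1 r p] prime_ge_2_nat[of p] by simp

context
  fixes p :: nat
  assumes pr: "prime p" and ch: "of_nat p = (0::'k::field)"
begin

lemma rels_eq_sum_frob_rel:
  fixes C :: "nat \<Rightarrow> nat \<Rightarrow> 'k"
  assumes "x \<in> rels (p ^ r) n v C off"
  obtains a where "x = - (\<Sum>j<n. Const (a j ^ p ^ r) * frob_rel (p ^ r) n C off j)"
proof -
  obtain a where x: "x = PhiM (p ^ r) n C off a - elemM n off a ^ p ^ r"
    using assms by (auto simp: rels_def)
  have "elemM n off a ^ p ^ r = (\<Sum>j<n. (Const (a j) * Var (off + j)) ^ p ^ r :: 'k mpoly)"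
    unfolding elemM_def by (rule freshmans_dream_sum') (simp_all add: CHAR_mpoly[OF pr ch] pr)
  hence "x = - (\<Sum>j<n. Const (a j ^ p ^ r) * frob_rel (p ^ r) n C off j)"
    unfolding x PhiM_def frob_rel_def elemM_def
    by (simp add: power_mult_distrib Const_power right_diff_distrib sum_subtractf sum_distrib_left)
  thus ?thesis
    using that by blast
qed

lemma rels_subset_ideal_gen:
  fixes C :: "nat \<Rightarrow> nat \<Rightarrow> 'k"
  assumes "\<And>j. j < n \<Longrightarrow> frob_rel (p ^ r) n C off j \<in> ideal_gen S G"
  shows "rels (p ^ r) n v C off \<subseteq> ideal_gen S G"
proof
  fix x assume "x \<in> rels (p ^ r) n v C off"
  then obtain a where "x = - (\<Sum>j<n. Const (a j ^ p ^ r) * frob_rel (p ^ r) n C off j)"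
    by (rule rels_eq_sum_frob_rel)
  thus "x \<in> ideal_gen S G"
    using assms by (auto intro!: ideal_gen_uminus ideal_gen_sum ideal_gen_Const_mult)
qed

lemma idealA_eq_frob_ideal:
  fixes C :: "nat \<Rightarrow> nat \<Rightarrow> 'k"
  assumes d: "discrete_valuation v"
  shows "idealA (p ^ r) n v C = frob_ideal (p ^ r) n C"
  unfolding idealA_def
proof (intro antisym ideal_gen_subset)
  show "rels (p ^ r) n v C 0 \<subseteq> frob_ideal (p ^ r) n C"
    by (rule rels_subset_ideal_gen) (simp add: frob_rel_in_frob_ideal)
  have q: "0 < p ^ r"
    using pr by (simp add: prime_gt_0_nat)
  show "{frob_rel (p ^ r) n C 0 j | j. j < n} \<subseteq> ideal_gen {..<n} (rels (p ^ r) n v C 0)"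
  proof clarify
    fix j assume "j < n"
    thus "frob_rel (p ^ r) n C 0 j \<in> ideal_gen {..<n} (rels (p ^ r) n v C 0)"
      by (rule frob_rel_in_ideal_gen_rels[OF d _ q])
  qed
qed

lemma idealAA_eq_frob_ideal:
  fixes C :: "nat \<Rightarrow> nat \<Rightarrow> 'k"
  assumes d: "discrete_valuation v"
  shows "idealAA (p ^ r) n v C = frob_ideal (p ^ r) (2 * n) (block_diag n C)"
  unfolding idealAA_def
proof (intro antisym ideal_gen_subset Un_least)
  show "rels (p ^ r) n v C 0 \<subseteq> frob_ideal (p ^ r) (2 * n) (block_diag n C)"
    by (rule rels_subset_ideal_gen) (rule frob_rel_in_frob_ideal_block_diag)
  show "rels (p ^ r) n v C n \<subseteq> frob_ideal (p ^ r) (2 * n) (block_diag n C)"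
    by (rule rels_subset_ideal_gen) (rule frob_rel_in_frob_ideal_block_diag)
  let ?I = "ideal_gen {..<2 * n} (rels (p ^ r) n v C 0 \<union> rels (p ^ r) n v C n)"
  have q: "0 < p ^ r"
    using pr by (simp add: prime_gt_0_nat)
  have low: "frob_rel (p ^ r) n C 0 j \<in> ?I" if "j < n" for j
    by (rule subsetD[OF ideal_gen_mono frob_rel_in_ideal_gen_rels[OF d that q]]) auto
  have high: "frob_rel (p ^ r) n C n j \<in> ?I" if "j < n" for j
    by (rule subsetD[OF ideal_gen_mono frob_rel_in_ideal_gen_rels[OF d that q]]) auto
  show "{frob_rel (p ^ r) (2 * n) (block_diag n C) 0 j | j. j < 2 * n} \<subseteq> ?I"
  proof clarify
    fix j assume j: "j < 2 * n"
    show "frob_rel (p ^ r) (2 * n) (block_diag n C) 0 j \<in> ?I"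
    proof (cases "j < n")
      case True
      thus ?thesis using low by (simp add: frob_rel_block_diag_low)
    next
      case False
      thus ?thesis using high[of "j - n"] j frob_rel_block_diag_high[of "j - n" n "p ^ r" C] by simp
    qed
  qed
qed

lemma Delta_frob_ideal:
  fixes C :: "nat \<Rightarrow> nat \<Rightarrow> 'k"
  assumes "x \<in> frob_ideal (p ^ r) n C"
  shows "Delta n x \<in> frob_ideal (p ^ r) (2 * n) (block_diag n C)"
  unfolding Delta_def
proof (rule ideal_gen_subst[OF _ _ assms])
  let ?\<sigma> = "\<lambda>i. if i < n then Var i + Var (n + i) else Var i"
  fix g assume "g \<in> {frob_rel (p ^ r) n C 0 j | j. j < n}"
  then obtain j where j: "j < n" "g = frob_rel (p ^ r) n C 0 j"
    by blast
  have "(Var j + Var (n + j) :: 'k mpoly) ^ p ^ r = Var j ^ p ^ r + Var (n + j) ^ p ^ r"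
    by (rule freshmans_dream') (simp_all add: CHAR_mpoly[OF pr ch] pr)
  hence "subst ?\<sigma> g = frob_rel (p ^ r) n C 0 j + frob_rel (p ^ r) n C n j"
    unfolding j(2) subst_frob_rel using j(1) by (simp add: frob_rel_def distrib_left sum.distrib)
  thus "subst ?\<sigma> g \<in> frob_ideal (p ^ r) (2 * n) (block_diag n C)"
    using ideal_gen_add[OF frob_rel_in_frob_ideal_block_diag[OF j(1)]] by simp
qed (auto intro!: vars_in_add vars_in_Var)

lemma delta_plus_frob_ideal:
  fixes C :: "nat \<Rightarrow> nat \<Rightarrow> 'k"
  assumes "x \<in> frob_ideal (p ^ r) n C"
  shows "delta_plus n x \<in> frob_ideal (p ^ r) (2 * n) (block_diag n C)"
  unfolding delta_plus_def using assms frob_ideal_subset_block_diag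
  by (intro ideal_gen_diff Delta_frob_ideal one_tensor_frob_ideal) auto

end

section \<open>Coefficients of delta_plus\<close>

definition coproduct_var :: "nat \<Rightarrow> nat \<Rightarrow> 'k::comm_ring_1 mpoly" where
  "coproduct_var n i = (if i < n then Var i + Var (n + i) else Var i)"

lemma lookup_Delta:
  "lookup (Delta n r) \<mu> = (\<Sum>e\<in>keys r. lookup r e * lookup (subst_monom (coproduct_var n) e) \<mu>)"
  unfolding Delta_def subst_eq_lin_ext lin_ext_def coproduct_var_def[abs_def]
  by (simp add: lookup_sum lookup_Const_mult)

text \<open>A monomial \<mu> in 2n variables stands for x^\<mu>' \<otimes> x^\<mu>'', where \<mu>' is \<mu> on the variables below n
  and \<mu>'' is \<mu> shifted down by n.\<close>
definition is_split :: "nat \<Rightarrow> (nat \<Rightarrow>\<^sub>0 nat) \<Rightarrow> (nat \<Rightarrow>\<^sub>0 nat) \<Rightarrow> bool" where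
  "is_split n e \<mu> \<longleftrightarrow>
     (\<forall>i<n. lookup \<mu> i + lookup \<mu> (n + i) = lookup e i) \<and> (\<forall>j. 2 * n \<le> j \<longrightarrow> lookup \<mu> j = 0)"

definition split_binom :: "nat \<Rightarrow> (nat \<Rightarrow>\<^sub>0 nat) \<Rightarrow> (nat \<Rightarrow>\<^sub>0 nat) \<Rightarrow> nat" where
  "split_binom n e \<mu> = (\<Prod>i<n. lookup e i choose lookup \<mu> i)"

lemma is_split_zero: "is_split n 0 \<mu> \<longleftrightarrow> \<mu> = 0"
proof
  assume split: "is_split n 0 \<mu>"
  show "\<mu> = 0"
  proof (rule poly_mapping_eqI)
    fix j
    show "lookup \<mu> j = lookup 0 j"
    proof (cases "n \<le> j \<and> j < 2 * n")
      case True
      hence "j - n < n" "n + (j - n) = j"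
        by auto
      thus ?thesis
        using split by (auto simp: is_split_def)
    qed (use split in \<open>auto simp: is_split_def not_le\<close>)
  qed
qed (simp add: is_split_def)

lemma is_split_minus_single:
  assumes "k < n" "0 < lookup e k" "0 < lookup \<mu> l" "l = k \<or> l = n + k"
  shows "is_split n (e - single k 1) (\<mu> - single l 1) \<longleftrightarrow> is_split n e \<mu>"
proof -
  have "lookup (\<mu> - single l 1) x + lookup (\<mu> - single l 1) (n + x) = lookup (e - single k 1) x
      \<longleftrightarrow> lookup \<mu> x + lookup \<mu> (n + x) = lookup e x" if "x < n" for x
    using assms that by (cases "x = k") (auto simp: lookup_minus lookup_single_nat)
  moreover have "lookup (\<mu> - single l 1) j = lookup \<mu> j" if "2 * n \<le> j" for j
    using assms that by (auto simp: lookup_minus lookup_single_nat)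
  ultimately show ?thesis
    unfolding is_split_def by auto
qed

lemma split_binom_pascal:
  assumes k: "k < n" "0 < lookup e k" and split: "is_split n e \<mu>"
  shows "split_binom n e \<mu> =
      (if 0 < lookup \<mu> k then split_binom n (e - single k 1) (\<mu> - single k 1) else 0)
    + (if 0 < lookup \<mu> (n + k) then split_binom n (e - single k 1) (\<mu> - single (n + k) 1) else 0)"
proof -
  define W where "W = (\<Prod>x\<in>{..<n} - {k}. lookup e x choose lookup \<mu> x)"
  have split_off: "split_binom n e' \<mu>' = (lookup e' k choose lookup \<mu>' k) * W"
    if "\<And>x. x < n \<Longrightarrow> x \<noteq> k \<Longrightarrow> lookup e' x = lookup e x"
      and "\<And>x. x < n \<Longrightarrow> x \<noteq> k \<Longrightarrow> lookup \<mu>' x = lookup \<mu> x" for e' \<mu>'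
  proof -
    have "(\<Prod>x\<in>{..<n} - {k}. lookup e' x choose lookup \<mu>' x) = W"
      unfolding W_def using that by (intro prod.cong) auto
    thus ?thesis
      unfolding split_binom_def using k(1) by (simp add: prod.remove)
  qed
  obtain a where a: "lookup e k = Suc a"
    using k(2) by (cases "lookup e k") auto
  have V0: "split_binom n e \<mu> = (Suc a choose lookup \<mu> k) * W"
    using a by (subst split_off) auto
  have V1: "split_binom n (e - single k 1) (\<mu> - single k 1) = (a choose (lookup \<mu> k - 1)) * W"
    using a by (subst split_off) (auto simp: lookup_minus lookup_single_nat)
  have V2: "split_binom n (e - single k 1) (\<mu> - single (n + k) 1) = (a choose lookup \<mu> k) * W"
    using a k(1) by (subst split_off) (auto simp: lookup_minus lookup_single_nat)
  have sum: "lookup \<mu> k + lookup \<mu> (n + k) = Suc a"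
    using split k(1) a by (simp add: is_split_def)
  show ?thesis
    unfolding V0 V1 V2 using sum by (cases "lookup \<mu> k") (auto simp: algebra_simps)
qed

lemma lookup_subst_monom_coproduct_var:
  assumes "keys e \<subseteq> {..<n}"
  shows "lookup (subst_monom (coproduct_var n) e :: 'k::comm_ring_1 mpoly) \<mu> =
    (if is_split n e \<mu> then of_nat (split_binom n e \<mu>) else 0)"
  using assms
proof (induction "total_degree e" arbitrary: e \<mu> rule: less_induct)
  case less
  show ?case
  proof (cases "e = 0")
    case True
    thus ?thesis
      by (simp add: is_split_zero split_binom_def lookup_one when_def)
  next
    case False
    then obtain k where "k \<in> keys e"
      by fastforce
    hence k: "k < n" "0 < lookup e k"
      using less.prems by (auto simp: in_keys_iff subset_iff)
    define e' where "e' = e - single k 1"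
    have e: "e = e' + single k 1"
      using single_add_minus_single[of 1 e k] k(2) by (simp add: e'_def)
    have "total_degree e' < total_degree e"
      unfolding e by (simp add: total_degree_add)
    moreover have "keys e' \<subseteq> {..<n}"
      using keys_minus_single[of e k 1] less.prems by (simp add: e'_def)
    ultimately have IH: "lookup (subst_monom (coproduct_var n) e' :: 'k mpoly) \<nu> =
        (if is_split n e' \<nu> then of_nat (split_binom n e' \<nu>) else 0)" for \<nu>
      using less.hyps by blast
    have "subst_monom (coproduct_var n) e = subst_monom (coproduct_var n) e' * (Var k + Var (n + k) :: 'k mpoly)"
      by (subst e) (simp add: subst_monom_add subst_monom_single coproduct_var_def k(1))
    hence "lookup (subst_monom (coproduct_var n) e :: 'k mpoly) \<mu> =
        (if 0 < lookup \<mu> k then lookup (subst_monom (coproduct_var n) e' :: 'k mpoly) (\<mu> - single k 1) else 0) +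
        (if 0 < lookup \<mu> (n + k) then lookup (subst_monom (coproduct_var n) e' :: 'k mpoly) (\<mu> - single (n + k) 1) else 0)"
      by (simp only: distrib_left lookup_add lookup_mult_Var)
    thus ?thesis
      unfolding IH using is_split_minus_single[OF k, folded e'_def] split_binom_pascal[OF k, of \<mu>, folded e'_def]
      by (cases "is_split n e \<mu>") auto
  qed
qed

definition shift_monom :: "nat \<Rightarrow> (nat \<Rightarrow>\<^sub>0 nat) \<Rightarrow> (nat \<Rightarrow>\<^sub>0 nat)" where
  "shift_monom n g = (\<Sum>j\<in>keys g. single (n + j) (lookup g j))"

lemma lookup_shift_monom: "lookup (shift_monom n g) x = (if n \<le> x then lookup g (x - n) else 0)"
proof -
  have "lookup (shift_monom n g) x = (\<Sum>j\<in>keys g. if j = x - n \<and> n \<le> x then lookup g j else 0)"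
    unfolding shift_monom_def lookup_sum by (intro sum.cong refl) (auto simp: lookup_single_nat)
  also have "\<dots> = (if n \<le> x then lookup g (x - n) else 0)"
    by (cases "n \<le> x") (simp_all add: in_keys_iff)
  finally show ?thesis .
qed

lemma is_split_single_shift_iff:
  assumes e: "keys e \<subseteq> {..<n}" and e': "keys e' \<subseteq> {..<n}" and i: "i < n" "s \<le> lookup e i"
  shows "is_split n e' (single i s + shift_monom n (e - single i s)) \<longleftrightarrow> e' = e"
    (is "is_split n e' ?\<mu> \<longleftrightarrow> _")
proof
  have lookup_\<mu>: "lookup ?\<mu> x = (if x = i then s else 0)
      + (if n \<le> x then lookup e (x - n) - (if x - n = i then s else 0) else 0)" for x
    by (simp add: lookup_add lookup_single_nat lookup_shift_monom lookup_minus)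
  {
    assume split: "is_split n e' ?\<mu>"
    show "e' = e"
    proof (rule poly_mapping_eqI)
      fix x
      show "lookup e' x = lookup e x"
      proof (cases "x < n")
        case True
        thus ?thesis
          using split i by (auto simp: is_split_def lookup_\<mu>)
      next
        case False
        hence "x \<notin> keys e" "x \<notin> keys e'"
          using e e' by auto
        thus ?thesis
          by (simp add: in_keys_iff)
      qed
    qed
  }
  assume "e' = e"
  moreover have "lookup ?\<mu> x = 0" if "2 * n \<le> x" for x
    using that e i by (auto simp: lookup_\<mu> in_keys_iff subset_iff)
  ultimately show "is_split n e' ?\<mu>"
    using i by (auto simp: is_split_def lookup_\<mu>)
qed

lemma split_binom_single_shift:
  assumes "i < n" "s \<le> lookup e i"
  shows "split_binom n e (single i s + shift_monom n (e - single i s)) = lookup e i choose s"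
proof -
  let ?\<mu> = "single i s + shift_monom n (e - single i s)"
  have "lookup ?\<mu> x = (if x = i then s else 0)" if "x < n" for x
    using that by (simp add: lookup_add lookup_single_nat lookup_shift_monom)
  thus ?thesis
    using assms unfolding split_binom_def by (simp add: prod.remove[of _ i])
qed

lemma lookup_delta_plus_mixed:
  assumes r: "vars_in {..<n} r" and \<mu>: "i \<in> keys \<mu>" "i < n" "j \<in> keys \<mu>" "n \<le> j"
  shows "lookup (delta_plus n r) \<mu> = lookup (Delta n r) \<mu>"
proof -
  have "lookup r \<mu> = 0"
    using \<mu>(4) by (intro lookup_eq_zero_if_not_vars_in[OF r \<mu>(3)]) simp
  moreover have "vars_in {n..<2 * n} (one_tensor n r)"
    unfolding one_tensor_def by (rule vars_in_subst[OF r]) (auto intro: vars_in_Var)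
  hence "lookup (one_tensor n r) \<mu> = 0"
    using \<mu>(2) by (intro lookup_eq_zero_if_not_vars_in[OF _ \<mu>(1)]) auto
  ultimately show ?thesis
    by (simp add: delta_plus_def lookup_minus)
qed

lemma lookup_delta_plus_single_shift:
  fixes r :: "'k::comm_ring_1 mpoly"
  assumes r: "vars_in {..<n} r" and e: "keys e \<subseteq> {..<n}" and i: "i < n" "0 < s" "s \<le> lookup e i"
    and ne: "e \<noteq> single i s"
  shows "lookup (delta_plus n r) (single i s + shift_monom n (e - single i s)) =
    lookup r e * of_nat (lookup e i choose s)"
proof -
  define \<mu> where "\<mu> = single i s + shift_monom n (e - single i s)"
  have "e - single i s \<noteq> 0"
    using single_add_minus_single[OF i(3)] ne by force
  then obtain j where j: "j \<in> keys (e - single i s)"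
    by fastforce
  hence "j < n"
    using e keys_minus_single[of e i s] by blast
  moreover have "n + j \<in> keys \<mu>"
    using j by (simp add: \<mu>_def in_keys_iff lookup_add lookup_shift_monom)
  moreover have "i \<in> keys \<mu>"
    using i by (simp add: \<mu>_def in_keys_iff lookup_add lookup_shift_monom lookup_single_nat)
  ultimately have "lookup (delta_plus n r) \<mu> = lookup (Delta n r) \<mu>"
    using i(1) by (intro lookup_delta_plus_mixed[OF r, of i _ "n + j"]) auto
  also have "\<dots> = (\<Sum>e'\<in>keys r. if e' = e then lookup r e * of_nat (lookup e i choose s) else 0)"
    unfolding lookup_Delta
  proof (intro sum.cong refl)
    fix e' assume "e' \<in> keys r"
    hence "keys e' \<subseteq> {..<n}"
      using r by (auto simp: vars_in_def)
    thus "lookup r e' * lookup (subst_monom (coproduct_var n) e' :: 'k mpoly) \<mu> =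
        (if e' = e then lookup r e * of_nat (lookup e i choose s) else 0)"
      using is_split_single_shift_iff[OF e _ i(1,3)] split_binom_single_shift[OF i(1,3)]
      by (simp add: lookup_subst_monom_coproduct_var \<mu>_def)
  qed
  also have "\<dots> = lookup r e * of_nat (lookup e i choose s)"
    by (simp add: in_keys_iff)
  finally show ?thesis
    by (simp add: \<mu>_def)
qed

lemma subst_monom_shift: "subst_monom (\<lambda>i. Var (n + i)) e = (Monom (shift_monom n e) :: 'k::comm_ring_1 mpoly)"
  unfolding subst_monom_def shift_monom_def by (simp add: Var_power prod_Monom)

lemma keys_one_tensor:
  assumes "\<mu> \<in> keys (one_tensor n (r :: 'k::comm_ring_1 mpoly))"
  obtains e where "e \<in> keys r" "\<mu> = shift_monom n e"
proof -
  have "\<mu> \<in> keys (\<Sum>e\<in>keys r. Const (lookup r e) * Monom (shift_monom n e) :: 'k mpoly)"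
    using assms unfolding one_tensor_def subst_eq_lin_ext lin_ext_def by (simp add: subst_monom_shift)
  hence "\<mu> \<in> (\<Union>e\<in>keys r. keys (Const (lookup r e) * Monom (shift_monom n e) :: 'k mpoly))"
    by (rule subsetD[OF keys_sum])
  then obtain e where e: "e \<in> keys r" "\<mu> \<in> keys (Const (lookup r e) * Monom (shift_monom n e) :: 'k mpoly)"
    by blast
  have "\<mu> \<in> keys (Monom (shift_monom n e) :: 'k mpoly)"
    using e(2) by (rule subsetD[OF keys_Const_mult])
  thus ?thesis
    using that e(1) by (simp add: keys_Monom)
qed

lemma keys_Delta:
  assumes r: "vars_in {..<n} r" and \<mu>: "\<mu> \<in> keys (Delta n r)"
  obtains e where "e \<in> keys r" "is_split n e \<mu>"
proof -
  have "(\<Sum>e\<in>keys r. lookup r e * lookup (subst_monom (coproduct_var n) e) \<mu>) \<noteq> 0"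
    using \<mu> by (simp add: in_keys_iff lookup_Delta)
  then obtain e where "e \<in> keys r" "lookup r e * lookup (subst_monom (coproduct_var n) e) \<mu> \<noteq> 0"
    by (rule sum.not_neutral_contains_not_neutral)
  moreover have "keys e \<subseteq> {..<n}"
    using r \<open>e \<in> keys r\<close> by (auto simp: vars_in_def)
  ultimately show ?thesis
    using that by (auto simp: lookup_subst_monom_coproduct_var split: if_splits)
qed

lemma reduced_if_is_split:
  assumes split: "is_split n e \<mu>" and e: "reduced q n e"
  shows "reduced q (2 * n) \<mu>"
  unfolding reduced_def
proof (intro allI impI)
  fix j assume j: "j < 2 * n"
  have bound: "lookup \<mu> i + lookup \<mu> (n + i) < q" if "i < n" for i
    using split e that by (auto simp: is_split_def reduced_def)
  show "lookup \<mu> j < q"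
  proof (cases "j < n")
    case True
    thus ?thesis
      using bound[of j] by simp
  next
    case False
    hence "j - n < n" "n + (j - n) = j"
      using j by auto
    thus ?thesis
      using bound[of "j - n"] by simp
  qed
qed

lemma reduced_double_if_vars_in:
  assumes "keys \<mu> \<subseteq> {..<n}" "reduced q n \<mu>" "0 < q"
  shows "reduced q (2 * n) \<mu>"
  unfolding reduced_def
proof (intro allI impI)
  fix j
  show "lookup \<mu> j < q"
  proof (cases "j < n")
    case False
    hence "j \<notin> keys \<mu>"
      using assms(1) by auto
    thus ?thesis
      using assms(3) by (simp add: in_keys_iff)
  qed (use assms(2) in \<open>simp add: reduced_def\<close>)
qed

lemma reduced_shift_monom: "reduced q n e \<Longrightarrow> 0 < q \<Longrightarrow> reduced q (2 * n) (shift_monom n e)"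
  unfolding reduced_def by (auto simp: lookup_shift_monom)

lemma reduced_delta_plus:
  assumes q: "0 < q" and r: "vars_in {..<n} r" "reduced_poly q n r"
  shows "reduced_poly q (2 * n) (delta_plus n r)"
proof
  fix \<mu> assume "\<mu> \<in> keys (delta_plus n r)"
  hence "\<mu> \<in> keys (Delta n r) \<union> keys r \<union> keys (one_tensor n r)"
    unfolding delta_plus_def using keys_diff[of "Delta n r - r" "one_tensor n r"] keys_diff[of "Delta n r" r]
    by blast
  moreover have "reduced q (2 * n) \<mu>" if "\<mu> \<in> keys (Delta n r)"
    using r(1) that by (rule keys_Delta) (use r(2) reduced_if_is_split in blast)
  moreover have "reduced q (2 * n) \<mu>" if "\<mu> \<in> keys r"
    using that r q by (intro reduced_double_if_vars_in) (auto simp: vars_in_def)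
  moreover have "reduced q (2 * n) \<mu>" if "\<mu> \<in> keys (one_tensor n r)"
    using that by (rule keys_one_tensor) (use r(2) q reduced_shift_monom in blast)
  ultimately show "reduced q (2 * n) \<mu>"
    by blast
qed

section \<open>Integrality of the reduced representative\<close>

lemma subst_monom_scale:
  "subst_monom (\<lambda>i. Const \<alpha> * Var i) e = Const (\<alpha> ^ total_degree e) * (Monom e :: 'k::comm_ring_1 mpoly)"
proof -
  have "subst_monom (\<lambda>i. Const \<alpha> * Var i) e
      = (\<Prod>i\<in>keys e. Const (\<alpha> ^ lookup e i) * Monom (single i (lookup e i)) :: 'k mpoly)"
    unfolding subst_monom_def by (intro prod.cong refl) (simp add: power_mult_distrib Const_power Var_power)
  also have "\<dots> = Const (\<Prod>i\<in>keys e. \<alpha> ^ lookup e i) * Monom (\<Sum>i\<in>keys e. single i (lookup e i))"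
    by (simp add: prod.distrib prod_Monom Const_prod)
  also have "\<dots> = Const (\<alpha> ^ total_degree e) * Monom e"
    by (simp add: poly_mapping_sum_single[symmetric] total_degree_def power_sum)
  finally show ?thesis .
qed

lemma lookup_scal_act: "lookup (scal_act \<alpha> r) \<mu> = \<alpha> ^ total_degree \<mu> * lookup r \<mu>"
proof -
  have "lookup (scal_act \<alpha> r) \<mu> = (\<Sum>e\<in>keys r. if e = \<mu> then lookup r e * \<alpha> ^ total_degree e else 0)"
    unfolding scal_act_def subst_eq_lin_ext lin_ext_def lookup_sum
    by (intro sum.cong refl)
      (simp add: subst_monom_scale lookup_Const_mult lookup_Monom mult.assoc[symmetric] Const_mult[symmetric])
  also have "\<dots> = \<alpha> ^ total_degree \<mu> * lookup r \<mu>"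
    by (simp add: in_keys_iff mult.commute)
  finally show ?thesis .
qed

text \<open>Reduced representatives are unique, so F_q-linearity of the class of a can be read off
  coefficientwise from its normal form.\<close>
lemma coeff_nf_eigen:
  assumes q: "2 \<le> q" and a: "vars_in {..<n} a" "scal_act \<alpha> a - Const \<alpha> * a \<in> frob_ideal q n C"
    and \<alpha>: "\<alpha> ^ q = \<alpha>"
  shows "\<alpha> ^ total_degree e * lookup (nf q n C a) e = \<alpha> * lookup (nf q n C a) e"
proof -
  define r where "r = nf q n C a"
  have ar: "a - r \<in> frob_ideal q n C" and r: "reduced_poly q n r"
    unfolding r_def by (rule minus_nf_in_frob_ideal[OF q a(1)] reduced_nf[OF q])+
  have "scal_act \<alpha> r - Const \<alpha> * r
      = (scal_act \<alpha> a - Const \<alpha> * a) - scal_act \<alpha> (a - r) + Const \<alpha> * (a - r)"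
    by (simp add: scal_act_def subst_diff algebra_simps)
  also have "\<dots> \<in> frob_ideal q n C"
    by (rule ideal_gen_add[OF ideal_gen_diff[OF a(2) scal_act_frob_ideal[OF ar \<alpha>]]
          ideal_gen_Const_mult[OF ar]])
  finally have J: "scal_act \<alpha> r - Const \<alpha> * r \<in> frob_ideal q n C" .
  have "reduced_poly q n (scal_act \<alpha> r)"
    using r by (auto simp: in_keys_iff lookup_scal_act)
  moreover have "reduced_poly q n (Const \<alpha> * r)"
    using r keys_Const_mult by blast
  ultimately have "scal_act \<alpha> r = Const \<alpha> * r"
    using r by (intro reduced_eq_if_frob_ideal[OF q _ _ J])
  hence "lookup (scal_act \<alpha> r) e = lookup (Const \<alpha> * r) e"
    by simp
  thus ?thesis
    by (simp add: lookup_scal_act lookup_Const_mult r_def)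
qed

lemma coeffs_in_delta_plus_nf:
  fixes C :: "nat \<Rightarrow> nat \<Rightarrow> 'k::field"
  assumes d: "discrete_valuation v" and pr: "prime p" and ch: "of_nat p = (0::'k)"
    and q: "2 \<le> p ^ k" and C: "\<forall>i<n. \<forall>j<n. C i j \<in> val_ring v" and a: "vars_in {..<n} a"
    and b: "coeffs_in (val_ring v) b" "delta_plus n a - b \<in> frob_ideal (p ^ k) (2 * n) (block_diag n C)"
  shows "coeffs_in (val_ring v) (delta_plus n (nf (p ^ k) n C a))"
proof -
  let ?r = "nf (p ^ k) n C a" and ?nf2 = "nf (p ^ k) (2 * n) (block_diag n C)"
  have "delta_plus n ?r - b = (delta_plus n a - b) - delta_plus n (a - ?r)"
    by (simp add: delta_plus_diff)
  also have "\<dots> \<in> frob_ideal (p ^ k) (2 * n) (block_diag n C)"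
    using b(2) delta_plus_frob_ideal[OF pr ch minus_nf_in_frob_ideal[OF q a]] by (rule ideal_gen_diff)
  finally have "?nf2 (delta_plus n ?r - b) = 0"
    by (rule nf_frob_ideal[OF q])
  hence "?nf2 (delta_plus n ?r) = ?nf2 b"
    by (simp add: nf_diff)
  moreover have "?nf2 (delta_plus n ?r) = delta_plus n ?r"
    using q by (intro nf_eq_self reduced_delta_plus[OF _ vars_in_nf[OF q a order_refl] reduced_nf[OF q]])
      linarith
  ultimately show ?thesis
    using coeffs_in_nf[OF d block_diag_in_val_ring[OF C] q b(1)] by simp
qed

lemma exists_root_power_ne:
  assumes card: "card {x::'k::field. x ^ q = x} = q" and d: "2 \<le> d" "d < q"
  obtains \<alpha> where "\<alpha> ^ q = \<alpha>" "\<alpha> ^ d \<noteq> (\<alpha> :: 'k)"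
proof -
  define P :: "'k poly" where "P = monom 1 d - [:0, 1:]"
  obtain k where "d = Suc (Suc k)"
    using d by (metis add_2_eq_Suc le_Suc_ex)
  hence "coeff P d = 1"
    by (simp add: P_def)
  hence P0: "P \<noteq> 0" by auto
  have "degree P \<le> max (degree (monom (1::'k) d)) (degree [:0::'k, 1:])"
    unfolding P_def by (rule degree_diff_le_max)
  hence degP: "degree P \<le> d"
    using d by (simp add: degree_monom_eq)
  show ?thesis
  proof (rule ccontr)
    assume "\<not> ?thesis"
    hence "{x::'k. x ^ q = x} \<subseteq> {x. poly P x = 0}"
      using that by (auto simp: P_def poly_monom)
    hence "q \<le> card {x. poly P x = 0}"
      using card poly_roots_finite[OF P0] by (metis card_mono)
    also have "\<dots> \<le> degree P"
      by (rule card_poly_roots_bound[OF P0])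
    finally show False using degP d by simp
  qed
qed

lemma coeff_eq_zero_if_Fq_eigen:
  assumes card: "card (Fq q :: 'k::field set) = q" and t: "t \<noteq> 1" "t < q"
    and eigen: "\<And>\<alpha>. \<alpha> \<in> Fq q \<Longrightarrow> \<alpha> ^ t * c = \<alpha> * (c :: 'k)"
  shows "c = 0"
proof (cases "t = 0")
  case True
  thus ?thesis
    using eigen[of 0] t by (simp add: Fq_def power_0_left)
next
  case False
  have "card {x::'k. x ^ q = x} = q" "2 \<le> t"
    using card t False by (simp_all add: Fq_def)
  then obtain \<alpha> :: 'k where "\<alpha> ^ q = \<alpha>" "\<alpha> ^ t \<noteq> \<alpha>"
    using t(2) by (rule exists_root_power_ne)
  moreover have "(\<alpha> ^ t - \<alpha>) * c = 0"
    using eigen[of \<alpha>] \<open>\<alpha> ^ q = \<alpha>\<close> by (simp add: Fq_def algebra_simps)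
  ultimately show ?thesis
    by simp
qed

lemma coeff_in_val_ring_unless_pure_power:
  assumes r: "vars_in {..<n} r" and dr: "coeffs_in (val_ring v) (delta_plus n r)"
    and \<mu>: "keys \<mu> \<subseteq> {..<n}" "\<forall>i t. \<mu> \<noteq> single i t"
  shows "lookup r \<mu> \<in> val_ring v"
proof -
  have "\<mu> \<noteq> 0"
    using \<mu>(2) by (metis single_zero)
  then obtain i where "i \<in> keys \<mu>"
    by fastforce
  hence i: "i < n" "0 < lookup \<mu> i"
    using \<mu>(1) by (blast, simp add: in_keys_iff)
  have "lookup (delta_plus n r) (single i (lookup \<mu> i) + shift_monom n (\<mu> - single i (lookup \<mu> i)))
      = lookup r \<mu>"
    using lookup_delta_plus_single_shift[OF r \<mu>(1) i] \<mu>(2) by simp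
  thus ?thesis
    using dr unfolding coeffs_in_def by metis
qed

lemma coeff_in_val_ring_unless_linear:
  fixes r :: "'k::field mpoly"
  assumes card: "card (Fq q :: 'k set) = q" and q: "2 \<le> q"
    and r: "vars_in {..<n} r" "reduced_poly q n r"
    and dr: "coeffs_in (val_ring v) (delta_plus n r)"
    and eigen: "\<And>\<alpha> e. \<alpha> \<in> Fq q \<Longrightarrow> \<alpha> ^ total_degree e * lookup r e = \<alpha> * lookup r e"
    and nonlinear: "\<forall>j<n. \<mu> \<noteq> single j 1"
  shows "lookup r \<mu> \<in> val_ring v"
proof (cases "\<mu> \<in> keys r")
  case False
  thus ?thesis
    by (simp add: in_keys_iff)
next
  case True
  have \<mu>: "keys \<mu> \<subseteq> {..<n}" "reduced q n \<mu>"
    using r True by (auto simp: vars_in_def)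
  show ?thesis
  proof (cases "\<exists>i t. \<mu> = single i t")
    case True
    then obtain i t where \<mu>_eq: "\<mu> = single i t"
      by blast
    have "t \<noteq> 1 \<and> t < q"
    proof (cases "t = 0")
      case False
      hence "i < n"
        using \<mu>(1) \<mu>_eq by auto
      thus ?thesis
        using nonlinear \<mu>(2) \<mu>_eq by (auto simp: reduced_def)
    qed (use q in simp)
    hence "lookup r \<mu> = 0"
      using eigen[of _ \<mu>] \<mu>_eq by (intro coeff_eq_zero_if_Fq_eigen[OF card]) auto
    thus ?thesis
      by simp
  qed (use coeff_in_val_ring_unless_pure_power[OF r(1) dr \<mu>(1)] in blast)
qed

lemma lookup_minus_linear_part:
  "lookup (r - elemM n 0 (\<lambda>j. lookup r (single j 1))) \<mu> = (if \<exists>j<n. \<mu> = single j 1 then 0 else lookup r \<mu>)"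
proof -
  have "lookup (elemM n 0 (\<lambda>j. lookup r (single j 1))) \<mu> = (\<Sum>j<n. if \<mu> = single j 1 then lookup r \<mu> else 0)"
    unfolding elemM_def lookup_sum
    by (intro sum.cong refl) (auto simp: lookup_Const_mult Var_def lookup_single when_def)
  also have "\<dots> = (if \<exists>j<n. \<mu> = single j 1 then lookup r \<mu> else 0)"
    by (auto simp: single_eq_single_iff intro: sum.neutral)
  finally show ?thesis
    by (auto simp: lookup_minus)
qed

theorem lemma1:
  fixes v :: "'k::field \<Rightarrow> int"
    and p q r n :: nat
    and C :: "nat \<Rightarrow> nat \<Rightarrow> 'k"
    and a :: "'k mpoly"
  assumes dvr: "discrete_valuation v"
    and complete: "val_complete v"
    and perfect: "perfect_residue_field p v"
    and prime_p: "prime p"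
    and charp: "of_nat p = (0::'k)"
    and q_def: "q = p ^ r" and r_pos: "r \<ge> 1"
    and Fq_sub: "card (Fq q :: 'k set) = q"
    and C_int: "\<forall>i<n. \<forall>j<n. C i j \<in> val_ring v"
    and Phi_iso: "Phi_K_iso n C"
    and a_vars: "vars_in {..<n} a"
    and delta_int: "\<exists>b. vars_in {..<2*n} b \<and> coeffs_in (val_ring v) b \<and>
                        delta_plus n a - b \<in> idealAA q n v C"
    and Fq_lin: "\<forall>\<alpha> \<in> Fq q. scal_act \<alpha> a - Const \<alpha> * a \<in> idealA q n v C"
  shows "\<exists>a'. vars_in {..<n} a' \<and> coeffs_in (val_ring v) a' \<and>
              delta_plus n a - delta_plus n a' \<in> idealAA q n v C \<and>
              (\<exists>c :: nat \<Rightarrow> 'k. a - a' - elemM n 0 c \<in> idealA q n v C)"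
proof -
  have q2: "2 \<le> q"
    using prime_power_ge_2[OF prime_p r_pos] q_def by simp
  have idealA: "idealA q n v C = frob_ideal q n C"
    and idealAA: "idealAA q n v C = frob_ideal q (2 * n) (block_diag n C)"
    using idealA_eq_frob_ideal[OF prime_p charp dvr] idealAA_eq_frob_ideal[OF prime_p charp dvr] q_def
    by simp_all
  define r where "r = nf q n C a"
  have r: "vars_in {..<n} r" "reduced_poly q n r" and ar: "a - r \<in> frob_ideal q n C"
    unfolding r_def
    by (rule vars_in_nf[OF q2 a_vars order_refl] reduced_nf[OF q2] minus_nf_in_frob_ideal[OF q2 a_vars])+
  obtain b where "coeffs_in (val_ring v) b" "delta_plus n a - b \<in> frob_ideal q (2 * n) (block_diag n C)"
    using delta_int idealAA by blast
  hence "coeffs_in (val_ring v) (delta_plus n r)"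
    unfolding r_def q_def
    by (rule coeffs_in_delta_plus_nf[OF dvr prime_p charp q2[unfolded q_def] C_int a_vars])
  moreover have "\<alpha> ^ total_degree e * lookup r e = \<alpha> * lookup r e" if "\<alpha> \<in> Fq q" for \<alpha> e
    using Fq_lin that unfolding r_def idealA Fq_def by (intro coeff_nf_eigen[OF q2 a_vars]) auto
  ultimately have integral: "\<forall>j<n. \<mu> \<noteq> single j 1 \<Longrightarrow> lookup r \<mu> \<in> val_ring v" for \<mu>
    by (rule coeff_in_val_ring_unless_linear[OF Fq_sub q2 r])
  define c where "c j = lookup r (single j 1)" for j
  show ?thesis
  proof (intro exI[of _ "r - elemM n 0 c"] conjI exI[of _ c])
    show "vars_in {..<n} (r - elemM n 0 c)"
      by (rule vars_in_diff[OF r(1) vars_in_elemM])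
    show "coeffs_in (val_ring v) (r - elemM n 0 c)"
      unfolding coeffs_in_def c_def lookup_minus_linear_part using integral by simp
    show "delta_plus n a - delta_plus n (r - elemM n 0 c) \<in> idealAA q n v C"
      using delta_plus_frob_ideal[OF prime_p charp ar[unfolded q_def]] idealAA q_def
      by (simp add: delta_plus_diff delta_plus_elemM)
    show "a - (r - elemM n 0 c) - elemM n 0 c \<in> idealA q n v C"
      using ar idealA by simp
  qed
qed

end
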